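(* Let $\alpha>0$ and $\beta\ge 0$ satisfy $2\alpha\tanh\beta<1$. Consider the dilute mean field ferromagnet on $N$ spins with connectivity $\alpha$ at inverse temperature $\beta$ (defined in the context). Then for every integer $n\ge 2$, $$\langle q^{2}_{1\cdots n}\rangle=\mathbb{E}\,\Omega^{n}(\sigma_{i_{0}}\sigma_{j_{0}})\le \mathbb{E}\,\Omega(\sigma_{i_{0}}\sigma_{j_{0}})=\langle m^{2}\rangle = O(1/N),$$ where $O(1/N)$ means that $\sup_{N} N\langle m^2\rangle<\infty$ (for fixed $\alpha,\beta$).
   Context: Spin configurations are $\sigma=(\sigma_1,\dots,\sigma_N)\in\{-1,+1\}^N$. Let $\{i_\nu,j_\nu\}_{\nu\ge 1}$ be independent random variables, each uniformly distributed on $\{1,\dots,N\}$, and let $K$ be an independent Poisson random variable with mean $\alpha N$. The random Hamiltonian is $H_N(\sigma)=-\sum_{\nu=1}^{K}\sigma_{i_\nu}\sigma_{j_\nu}$. The partition function is $Z_N=\sum_\sigma e^{-\beta H_N(\sigma)}$ and the (random) Boltzmann–Gibbs expectation of an observable $\mathcal O$ is $\Omega(\mathcal O)=Z_N^{-1}\sum_\sigma e^{-\beta H_N(\sigma)}\mathcal O(\sigma)$; for observables depending on several configurations (replicas) $\sigma^{(1)},\dots,\sigma^{(n)}$, $\Omega$ denotes the product measure over independent replicas with the same Hamiltonian. $\mathbb{E}$ denotes expectation over all the randomness ($K$ and the $i_\nu,j_\nu$), and $\langle\cdot\rangle=\mathbb{E}\,\Omega(\cdot)$. The magnetization is $m(\sigma)=\frac1N\sum_{i=1}^N\sigma_i$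 and the overlap of $n$ replicas is $q_{1\cdots n}=\frac1N\sum_{i=1}^N\sigma^{(1)}_i\cdots\sigma^{(n)}_i$. The indices $i_0,j_0$ are independent, uniformly distributed on $\{1,\dots,N\}$ and independent of all random variables entering $\Omega$. *)

theory Defs
  imports "HOL-Probability.Probability"
begin

text \<open>Sites are indexed by 0..N-1 (instead of 1..N). A disorder realization is the list of edges
  [(i_1,j_1),...,(i_K,j_K)].\<close>

definition configs :: "nat \<Rightarrow> (nat \<Rightarrow> real) set" where
  "configs N = PiE {..<N} (\<lambda>_. {-1, 1})"

definition hamiltonian :: "(nat \<times> nat) list \<Rightarrow> (nat \<Rightarrow> real) \<Rightarrow> real" where
  "hamiltonian es \<sigma> = - (\<Sum>e\<leftarrow>es. \<sigma> (fst e) * \<sigma> (snd e))"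

definition boltz :: "real \<Rightarrow> (nat \<times> nat) list \<Rightarrow> (nat \<Rightarrow> real) \<Rightarrow> real" where
  "boltz \<beta> es \<sigma> = exp (- \<beta> * hamiltonian es \<sigma>)"

definition partition_fn :: "nat \<Rightarrow> real \<Rightarrow> (nat \<times> nat) list \<Rightarrow> real" where
  "partition_fn N \<beta> es = (\<Sum>\<sigma>\<in>configs N. boltz \<beta> es \<sigma>)"

definition gibbs :: "nat \<Rightarrow> real \<Rightarrow> (nat \<times> nat) list \<Rightarrow> ((nat \<Rightarrow> real) \<Rightarrow> real) \<Rightarrow> real" where
  "gibbs N \<beta> es obs = (\<Sum>\<sigma>\<in>configs N. boltz \<beta> es \<sigma> * obs \<sigma>) / partition_fn N \<beta> es"

definition gibbs_rep :: "nat \<Rightarrow> real \<Rightarrow> (nat \<times> nat) list \<Rightarrow> nat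
    \<Rightarrow> ((nat \<Rightarrow> nat \<Rightarrow> real) \<Rightarrow> real) \<Rightarrow> real" where
  "gibbs_rep N \<beta> es n obs =
     (\<Sum>\<tau>\<in>PiE {..<n} (\<lambda>_. configs N). (\<Prod>a<n. boltz \<beta> es (\<tau> a)) * obs \<tau>)
       / partition_fn N \<beta> es ^ n"

definition magnetization :: "nat \<Rightarrow> (nat \<Rightarrow> real) \<Rightarrow> real" where
  "magnetization N \<sigma> = (\<Sum>i<N. \<sigma> i) / real N"

definition overlap :: "nat \<Rightarrow> nat \<Rightarrow> (nat \<Rightarrow> nat \<Rightarrow> real) \<Rightarrow> real" where
  "overlap N n \<tau> = (\<Sum>i<N. \<Prod>a<n. \<tau> a i) / real N"

definition site_pair_pmf :: "nat \<Rightarrow> (nat \<times> nat) pmf" where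
  "site_pair_pmf N = pmf_of_set ({..<N} \<times> {..<N})"

definition disorder :: "real \<Rightarrow> nat \<Rightarrow> (nat \<times> nat) list pmf" where
  "disorder \<alpha> N = bind_pmf (poisson_pmf (\<alpha> * real N)) (\<lambda>K. replicate_pmf K (site_pair_pmf N))"

definition Edis :: "real \<Rightarrow> nat \<Rightarrow> ((nat \<times> nat) list \<Rightarrow> real) \<Rightarrow> real" where
  "Edis \<alpha> N F = measure_pmf.expectation (disorder \<alpha> N) F"

definition Edis_sites :: "real \<Rightarrow> nat \<Rightarrow> ((nat \<times> nat) list \<Rightarrow> nat \<Rightarrow> nat \<Rightarrow> real) \<Rightarrow> real" where
  "Edis_sites \<alpha> N F =
     measure_pmf.expectation (pair_pmf (disorder \<alpha> N) (site_pair_pmf N))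
       (\<lambda>(es, (i0, j0)). F es i0 j0)"

end

theory Submission
  imports Defs
begin

text \<open>With \<open>t = tanh \<beta>\<close> every Boltzmann factor of a bond equals \<open>cosh \<beta> * (1 + t \<sigma>\<^sub>i \<sigma>\<^sub>j)\<close>.
  Expanding the product writes \<open>Z\<close> and \<open>Z \<langle>\<sigma>\<^sub>i \<sigma>\<^sub>j\<rangle>\<close> as sums over bond sets \<open>S\<close> of \<open>t^|S|\<close>
  times sums of characters of the group \<open>{-1,1}^N\<close>; such a sum is \<open>2^N\<close> or \<open>0\<close>. Hence all
  correlations are nonnegative, and \<open>\<langle>\<sigma>\<^sub>i \<sigma>\<^sub>j\<rangle>\<close> is at most the sum of \<open>t^l\<close> over chains of
  \<open>l\<close> distinct bonds leading from \<open>i\<close> to \<open>j\<close>: a nonvanishing term contains such a chain, and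
  removing it leaves a nonvanishing term of \<open>Z\<close>.

  For a fixed sequence of \<open>l\<close> sites, the expected number of injective choices of \<open>l\<close> of the
  \<open>K\<close> random bonds realising it is at most \<open>l! (K choose l) (2/N\<^sup>2)^l\<close>, and the Poisson
  factorial moment \<open>E[l! (K choose l)]\<close> is \<open>(\<alpha> N)^l\<close>. Summing over the \<open>N^(l+1)\<close> site
  sequences gives \<open>N \<langle>m\<^sup>2\<rangle> \<le> \<Sum>\<^sub>l (2 \<alpha> t)^l = 1 / (1 - 2 \<alpha> t)\<close>. The remaining identities express
  \<open>q\<^sup>2\<close> and \<open>m\<^sup>2\<close> as averages of \<open>\<sigma>\<^sub>i \<sigma>\<^sub>j\<close> over the uniform pair \<open>(i\<^sub>0, j\<^sub>0)\<close>, and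
  \<open>C^n \<le> C\<close> for correlations \<open>C \<in> [0,1]\<close>.\<close>


section \<open>Spin characters\<close>

definition edges_within :: "nat \<Rightarrow> (nat \<times> nat) list \<Rightarrow> bool" where
  "edges_within N es \<longleftrightarrow> (\<forall>e\<in>set es. fst e < N \<and> snd e < N)"

lemma edges_withinD: "edges_within N es \<Longrightarrow> \<nu> < length es \<Longrightarrow> fst (es ! \<nu>) < N \<and> snd (es ! \<nu>) < N"
  unfolding edges_within_def using nth_mem by blast

lemma configs_iff:
  "\<sigma> \<in> configs N \<longleftrightarrow> (\<forall>v<N. \<sigma> v = -1 \<or> \<sigma> v = 1) \<and> (\<forall>v. N \<le> v \<longrightarrow> \<sigma> v = undefined)"
  by (auto simp: configs_def PiE_iff extensional_def)

lemma finite_configs: "finite (configs N)"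
  by (simp add: configs_def finite_PiE)

lemma configs_nonempty: "configs N \<noteq> {}"
  by (simp add: configs_def PiE_eq_empty_iff)

lemma spin_cases: "\<sigma> \<in> configs N \<Longrightarrow> v < N \<Longrightarrow> \<sigma> v = -1 \<or> \<sigma> v = 1"
  by (auto simp: configs_iff)

lemma spin_square: "\<sigma> \<in> configs N \<Longrightarrow> v < N \<Longrightarrow> \<sigma> v * \<sigma> v = 1"
  using spin_cases[of \<sigma> N v] by auto

lemma abs_spin: "\<sigma> \<in> configs N \<Longrightarrow> v < N \<Longrightarrow> \<bar>\<sigma> v\<bar> = 1"
  using spin_cases by fastforce

definition spin_mult :: "nat \<Rightarrow> (nat \<Rightarrow> real) \<Rightarrow> (nat \<Rightarrow> real) \<Rightarrow> nat \<Rightarrow> real" where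
  "spin_mult N \<sigma> \<rho> = (\<lambda>v. if v < N then \<sigma> v * \<rho> v else undefined)"

lemma spin_mult_configs:
  assumes "\<sigma> \<in> configs N" "\<rho> \<in> configs N"
  shows "spin_mult N \<sigma> \<rho> \<in> configs N"
proof -
  have "\<sigma> v * \<rho> v = -1 \<or> \<sigma> v * \<rho> v = 1" if "v < N" for v
    using spin_cases[OF assms(1) that] spin_cases[OF assms(2) that] by auto
  then show ?thesis by (auto simp: configs_iff spin_mult_def)
qed

lemma spin_mult_cancel:
  assumes "\<sigma> \<in> configs N" "\<rho> \<in> configs N"
  shows "spin_mult N (spin_mult N \<sigma> \<rho>) \<rho> = \<sigma>"
proof
  fix v
  show "spin_mult N (spin_mult N \<sigma> \<rho>) \<rho> v = \<sigma> v"
  proof (cases "v < N")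
    case True
    then show ?thesis using spin_square[OF assms(2) True] by (simp add: spin_mult_def mult.assoc)
  next
    case False
    then show ?thesis using assms(1) by (simp add: spin_mult_def configs_iff)
  qed
qed

definition spin_character :: "nat \<Rightarrow> ((nat \<Rightarrow> real) \<Rightarrow> real) \<Rightarrow> bool" where
  "spin_character N f \<longleftrightarrow> (\<forall>\<sigma>\<in>configs N. f \<sigma> = -1 \<or> f \<sigma> = 1) \<and>
      (\<forall>\<sigma>\<in>configs N. \<forall>\<rho>\<in>configs N. f (spin_mult N \<sigma> \<rho>) = f \<sigma> * f \<rho>)"

lemma spin_character_site: "v < N \<Longrightarrow> spin_character N (\<lambda>\<sigma>. \<sigma> v)"
  unfolding spin_character_def using spin_cases[of _ N v] by (simp add: spin_mult_def)

lemma spin_character_one: "spin_character N (\<lambda>\<sigma>. 1)"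
  unfolding spin_character_def by auto

lemma spin_character_mult:
  assumes f: "spin_character N f" and g: "spin_character N g"
  shows "spin_character N (\<lambda>\<sigma>. f \<sigma> * g \<sigma>)"
proof -
  have "f \<sigma> * g \<sigma> = -1 \<or> f \<sigma> * g \<sigma> = 1" if "\<sigma> \<in> configs N" for \<sigma>
  proof -
    have "f \<sigma> = -1 \<or> f \<sigma> = 1" "g \<sigma> = -1 \<or> g \<sigma> = 1"
      using f g that unfolding spin_character_def by blast+
    then show ?thesis by auto
  qed
  moreover have "f (spin_mult N \<sigma> \<rho>) * g (spin_mult N \<sigma> \<rho>) = (f \<sigma> * g \<sigma>) * (f \<rho> * g \<rho>)"
    if "\<sigma> \<in> configs N" "\<rho> \<in> configs N" for \<sigma> \<rho>
    using f g that unfolding spin_character_def by (simp add: mult_ac)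
  ultimately show ?thesis unfolding spin_character_def by blast
qed

lemma spin_character_prod:
  "finite S \<Longrightarrow> (\<And>x. x \<in> S \<Longrightarrow> spin_character N (f x)) \<Longrightarrow> spin_character N (\<lambda>\<sigma>. \<Prod>x\<in>S. f x \<sigma>)"
  by (induction S rule: finite_induct) (simp_all add: spin_character_one spin_character_mult)

lemma sum_spin_character:
  assumes "spin_character N f"
  shows "(\<Sum>\<sigma>\<in>configs N. f \<sigma>) = (if \<forall>\<sigma>\<in>configs N. f \<sigma> = 1 then real (card (configs N)) else 0)"
proof (cases "\<forall>\<sigma>\<in>configs N. f \<sigma> = 1")
  case True
  then show ?thesis by simp
next
  case False
  then obtain \<rho> where r: "\<rho> \<in> configs N" "f \<rho> \<noteq> 1" by blast
  then have fr: "f \<rho> = -1" using assms unfolding spin_character_def by blast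
  have "(\<Sum>\<sigma>\<in>configs N. f \<sigma>) = (\<Sum>\<sigma>\<in>configs N. f (spin_mult N \<sigma> \<rho>))"
    by (rule sum.reindex_bij_witness[of _ "\<lambda>\<sigma>. spin_mult N \<sigma> \<rho>" "\<lambda>\<sigma>. spin_mult N \<sigma> \<rho>"])
       (auto simp: spin_mult_cancel spin_mult_configs r)
  also have "\<dots> = (\<Sum>\<sigma>\<in>configs N. - f \<sigma>)"
    using assms r fr unfolding spin_character_def by (intro sum.cong) auto
  finally have "(\<Sum>\<sigma>\<in>configs N. f \<sigma>) = 0" by (simp add: sum_negf)
  then show ?thesis using False by auto
qed

lemma sum_spin_character_nonneg: "spin_character N f \<Longrightarrow> 0 \<le> (\<Sum>\<sigma>\<in>configs N. f \<sigma>)"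
  by (simp add: sum_spin_character)


section \<open>High-temperature expansion\<close>

definition bond :: "(nat \<times> nat) list \<Rightarrow> nat \<Rightarrow> (nat \<Rightarrow> real) \<Rightarrow> real" where
  "bond es \<nu> \<sigma> = \<sigma> (fst (es ! \<nu>)) * \<sigma> (snd (es ! \<nu>))"

definition bond_prod :: "(nat \<times> nat) list \<Rightarrow> nat set \<Rightarrow> (nat \<Rightarrow> real) \<Rightarrow> real" where
  "bond_prod es S \<sigma> = (\<Prod>\<nu>\<in>S. bond es \<nu> \<sigma>)"

definition ht_weight :: "real \<Rightarrow> (nat \<times> nat) list \<Rightarrow> (nat \<Rightarrow> real) \<Rightarrow> real" where
  "ht_weight t es \<sigma> = (\<Prod>\<nu><length es. 1 + t * bond es \<nu> \<sigma>)"

definition ht_sum :: "nat \<Rightarrow> real \<Rightarrow> (nat \<times> nat) list \<Rightarrow> ((nat \<Rightarrow> real) \<Rightarrow> real) \<Rightarrow> real" where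
  "ht_sum N t es f = (\<Sum>\<sigma>\<in>configs N. ht_weight t es \<sigma> * f \<sigma>)"

lemma spin_character_bond: "edges_within N es \<Longrightarrow> \<nu> < length es \<Longrightarrow> spin_character N (bond es \<nu>)"
  unfolding bond_def by (drule edges_withinD) (auto intro!: spin_character_mult spin_character_site)

lemma spin_character_bond_prod: "edges_within N es \<Longrightarrow> S \<subseteq> {..<length es} \<Longrightarrow> spin_character N (bond_prod es S)"
  unfolding bond_prod_def
  by (rule spin_character_prod) (auto intro: spin_character_bond finite_subset[of S "{..<length es}"])

lemma bond_cases: "edges_within N es \<Longrightarrow> \<nu> < length es \<Longrightarrow> \<sigma> \<in> configs N \<Longrightarrow> bond es \<nu> \<sigma> = -1 \<or> bond es \<nu> \<sigma> = 1"
  using spin_character_bond unfolding spin_character_def by blast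

lemma exp_sign_cosh_tanh:
  fixes \<beta> x :: real
  assumes "x = -1 \<or> x = 1"
  shows "exp (\<beta> * x) = cosh \<beta> * (1 + tanh \<beta> * x)"
proof -
  have c: "cosh \<beta> > 0" by simp
  have e: "cosh \<beta> * (1 + tanh \<beta> * x) = cosh \<beta> + sinh \<beta> * x"
    using c unfolding tanh_def by (simp add: distrib_left)
  from assms show ?thesis
  proof
    assume "x = -1"
    then show ?thesis using e cosh_minus_sinh[of \<beta>] by simp
  next
    assume "x = 1"
    then show ?thesis using e cosh_plus_sinh[of \<beta>] by simp
  qed
qed

lemma boltz_ht_weight:
  assumes "edges_within N es" "\<sigma> \<in> configs N"
  shows "boltz \<beta> es \<sigma> = cosh \<beta> ^ length es * ht_weight (tanh \<beta>) es \<sigma>"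
proof -
  have "hamiltonian es \<sigma> = - (\<Sum>\<nu><length es. bond es \<nu> \<sigma>)"
    unfolding hamiltonian_def bond_def
    by (simp add: sum_list_sum_nth atLeast0LessThan)
  then have "boltz \<beta> es \<sigma> = exp (\<Sum>\<nu><length es. \<beta> * bond es \<nu> \<sigma>)"
    unfolding boltz_def by (simp add: sum_distrib_left sum_negf)
  also have "\<dots> = (\<Prod>\<nu><length es. exp (\<beta> * bond es \<nu> \<sigma>))"
    by (simp add: exp_sum)
  also have "\<dots> = (\<Prod>\<nu><length es. cosh \<beta> * (1 + tanh \<beta> * bond es \<nu> \<sigma>))"
    using bond_cases[OF assms(1) _ assms(2)] exp_sign_cosh_tanh by (intro prod.cong) auto
  also have "\<dots> = cosh \<beta> ^ length es * ht_weight (tanh \<beta>) es \<sigma>"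
    unfolding ht_weight_def by (simp add: prod.distrib)
  finally show ?thesis .
qed

lemma partition_fn_pos: "partition_fn N \<beta> es > 0"
  unfolding partition_fn_def boltz_def
  by (rule sum_pos) (auto simp: finite_configs configs_nonempty)

lemma sum_boltz_ht_sum:
  assumes "edges_within N es"
  shows "(\<Sum>\<sigma>\<in>configs N. boltz \<beta> es \<sigma> * f \<sigma>) = cosh \<beta> ^ length es * ht_sum N (tanh \<beta>) es f"
  unfolding ht_sum_def using boltz_ht_weight[OF assms] by (simp add: sum_distrib_left mult.assoc)

lemma partition_fn_ht_sum:
  assumes "edges_within N es"
  shows "partition_fn N \<beta> es = cosh \<beta> ^ length es * ht_sum N (tanh \<beta>) es (\<lambda>_. 1)"
  using sum_boltz_ht_sum[OF assms, of \<beta> "\<lambda>_. 1"] by (simp add: partition_fn_def)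

lemma ht_sum_one_pos:
  assumes "edges_within N es"
  shows "ht_sum N (tanh \<beta>) es (\<lambda>_. 1) > 0"
  using partition_fn_pos[of N \<beta> es] unfolding partition_fn_ht_sum[OF assms]
  by (metis cosh_real_pos zero_less_mult_pos zero_less_power)

lemma gibbs_ht_sum:
  assumes "edges_within N es"
  shows "gibbs N \<beta> es f = ht_sum N (tanh \<beta>) es f / ht_sum N (tanh \<beta>) es (\<lambda>_. 1)"
  unfolding gibbs_def sum_boltz_ht_sum[OF assms] partition_fn_ht_sum[OF assms] by simp

lemma ht_weight_expand:
  "ht_weight t es \<sigma> = (\<Sum>S\<in>Pow {..<length es}. t ^ card S * bond_prod es S \<sigma>)"
proof -
  have "ht_weight t es \<sigma> = (\<Prod>\<nu><length es. t * bond es \<nu> \<sigma> + 1)"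
    unfolding ht_weight_def by (simp add: add.commute)
  also have "\<dots> = (\<Sum>S\<in>Pow {..<length es}. (\<Prod>\<nu>\<in>S. t * bond es \<nu> \<sigma>) * (\<Prod>\<nu>\<in>{..<length es} - S. 1))"
    by (rule prod_add) simp
  also have "\<dots> = (\<Sum>S\<in>Pow {..<length es}. t ^ card S * bond_prod es S \<sigma>)"
    unfolding bond_prod_def by (intro sum.cong refl) (simp add: prod.distrib)
  finally show ?thesis .
qed

lemma ht_sum_expand:
  "ht_sum N t es f = (\<Sum>S\<in>Pow {..<length es}. t ^ card S * (\<Sum>\<sigma>\<in>configs N. bond_prod es S \<sigma> * f \<sigma>))"
proof -
  have "ht_sum N t es f = (\<Sum>\<sigma>\<in>configs N. \<Sum>S\<in>Pow {..<length es}. t ^ card S * (bond_prod es S \<sigma> * f \<sigma>))"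
    unfolding ht_sum_def ht_weight_expand by (simp add: sum_distrib_right mult.assoc)
  also have "\<dots> = (\<Sum>S\<in>Pow {..<length es}. \<Sum>\<sigma>\<in>configs N. t ^ card S * (bond_prod es S \<sigma> * f \<sigma>))"
    by (rule sum.swap)
  also have "\<dots> = (\<Sum>S\<in>Pow {..<length es}. t ^ card S * (\<Sum>\<sigma>\<in>configs N. bond_prod es S \<sigma> * f \<sigma>))"
    by (simp add: sum_distrib_left)
  finally show ?thesis .
qed

lemma ht_sum_character_nonneg:
  assumes "edges_within N es" "0 \<le> t" "spin_character N f"
  shows "0 \<le> ht_sum N t es f"
  unfolding ht_sum_expand
  by (intro sum_nonneg mult_nonneg_nonneg zero_le_power assms(2) sum_spin_character_nonneg spin_character_mult spin_character_bond_prod[OF assms(1)] assms(3)) auto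

lemma gibbs_corr_nonneg:
  assumes "edges_within N es" "0 \<le> \<beta>" "i < N" "j < N"
  shows "0 \<le> gibbs N \<beta> es (\<lambda>\<sigma>. \<sigma> i * \<sigma> j)"
  unfolding gibbs_ht_sum[OF assms(1)]
  using ht_sum_one_pos[OF assms(1), of \<beta>] assms
  by (intro divide_nonneg_pos ht_sum_character_nonneg spin_character_mult spin_character_site) (auto simp: tanh_real_nonneg_iff)

lemma gibbs_le_one:
  assumes "\<And>\<sigma>. \<sigma> \<in> configs N \<Longrightarrow> f \<sigma> \<le> 1"
  shows "gibbs N \<beta> es f \<le> 1"
proof -
  have "(\<Sum>\<sigma>\<in>configs N. boltz \<beta> es \<sigma> * f \<sigma>) \<le> (\<Sum>\<sigma>\<in>configs N. boltz \<beta> es \<sigma>)"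
    using assms by (intro sum_mono) (simp add: boltz_def)
  then show ?thesis using partition_fn_pos[of N \<beta> es]
    unfolding gibbs_def partition_fn_def by simp
qed

lemma gibbs_nonneg:
  assumes "\<And>\<sigma>. \<sigma> \<in> configs N \<Longrightarrow> 0 \<le> f \<sigma>"
  shows "0 \<le> gibbs N \<beta> es f"
  unfolding gibbs_def using partition_fn_pos[of N \<beta> es] assms
  by (intro divide_nonneg_pos sum_nonneg) (auto simp: boltz_def)

lemma gibbs_sum:
  assumes "finite I"
  shows "gibbs N \<beta> es (\<lambda>\<sigma>. \<Sum>x\<in>I. f x \<sigma>) = (\<Sum>x\<in>I. gibbs N \<beta> es (f x))"
proof -
  have "(\<Sum>\<sigma>\<in>configs N. boltz \<beta> es \<sigma> * (\<Sum>x\<in>I. f x \<sigma>)) = (\<Sum>\<sigma>\<in>configs N. \<Sum>x\<in>I. boltz \<beta> es \<sigma> * f x \<sigma>)"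
    by (simp add: sum_distrib_left)
  also have "\<dots> = (\<Sum>x\<in>I. \<Sum>\<sigma>\<in>configs N. boltz \<beta> es \<sigma> * f x \<sigma>)"
    by (rule sum.swap)
  finally show ?thesis unfolding gibbs_def by (simp add: sum_divide_distrib)
qed

lemma gibbs_divide: "gibbs N \<beta> es (\<lambda>\<sigma>. f \<sigma> / c) = gibbs N \<beta> es f / c"
  unfolding gibbs_def by (simp add: sum_divide_distrib mult.commute)


section \<open>Edge paths\<close>

text \<open>A walk from \<open>i\<close> through the sites \<open>vs = [v\<^sub>1, \<dots>, v\<^sub>l]\<close> is encoded by the list of
  unordered edges \<open>{i,v\<^sub>1}, {v\<^sub>1,v\<^sub>2}, \<dots>\<close>; its realisations in \<open>es\<close> are the lists of distinct
  edge indices matching this list position by position.\<close>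

definition path_patterns :: "nat \<Rightarrow> nat list \<Rightarrow> (nat \<times> nat) set list" where
  "path_patterns i vs = map (\<lambda>m. {((i#vs)!m, vs!m), (vs!m, (i#vs)!m)}) [0..<length vs]"

definition pattern_matches :: "(nat \<times> nat) list \<Rightarrow> (nat \<times> nat) set list \<Rightarrow> nat list set" where
  "pattern_matches es gs = {ns. length ns = length gs \<and> distinct ns \<and>
      (\<forall>k<length gs. ns!k < length es \<and> es!(ns!k) \<in> gs!k)}"

lemma length_path_patterns[simp]: "length (path_patterns i vs) = length vs"
  by (simp add: path_patterns_def)

lemma path_patterns_Cons_0[simp]: "path_patterns i (v#vs) ! 0 = {(i,v),(v,i)}"
  unfolding path_patterns_def by (simp del: upt_Suc)

lemma path_patterns_Cons_Suc[simp]: "m < length vs \<Longrightarrow> path_patterns i (v#vs) ! Suc m = path_patterns v vs ! m"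
  by (simp add: path_patterns_def del: upt_Suc)

lemma pattern_matches_path_Nil: "ns \<in> pattern_matches es (path_patterns i []) \<longleftrightarrow> ns = []"
  by (auto simp: pattern_matches_def)

lemma Cons_in_pattern_matches_path:
  "n # ns \<in> pattern_matches es (path_patterns i (v#vs)) \<longleftrightarrow>
     n < length es \<and> es!n \<in> {(i,v),(v,i)} \<and> n \<notin> set ns \<and> ns \<in> pattern_matches es (path_patterns v vs)"
  unfolding pattern_matches_def by (auto simp: All_less_Suc2)

lemma pattern_matches_path_Cons_shape:
  "ns \<in> pattern_matches es (path_patterns i (v#vs)) \<Longrightarrow> \<exists>n ns'. ns = n # ns'"
  by (cases ns) (auto simp: pattern_matches_def)

lemma finite_pattern_matches: "finite (pattern_matches es gs)"
proof -
  have "pattern_matches es gs \<subseteq> {ns. set ns \<subseteq> {..<length es} \<and> length ns = length gs}"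
    by (auto simp: pattern_matches_def in_set_conv_nth)
  then show ?thesis by (rule finite_subset) (simp add: finite_lists_length_eq)
qed

lemma pattern_matches_path_props:
  assumes "edges_within N es" "i < N" "ns \<in> pattern_matches es (path_patterns i vs)"
  shows "set vs \<subseteq> {..<N} \<and> last (i#vs) < N \<and> length vs = length ns \<and> set ns \<subseteq> {..<length es}"
  using assms(2,3)
proof (induction vs arbitrary: i ns)
  case Nil
  then show ?case by (simp add: pattern_matches_path_Nil)
next
  case (Cons v vs)
  obtain n ns' where ns: "ns = n # ns'" using pattern_matches_path_Cons_shape[OF Cons.prems(2)] by blast
  have h: "n < length es" "es!n \<in> {(i,v),(v,i)}" "n \<notin> set ns'" "ns' \<in> pattern_matches es (path_patterns v vs)"
    using Cons.prems(2) unfolding ns Cons_in_pattern_matches_path by auto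
  have "v < N" using edges_withinD[OF assms(1) h(1)] h(2) by auto
  from Cons.IH[OF this h(4)] h(1) \<open>v < N\<close> show ?case by (simp add: ns)
qed

lemma length_pattern_match_le:
  assumes "ns \<in> pattern_matches es gs" shows "length ns \<le> length es"
proof -
  have "set ns \<subseteq> {..<length es}" using assms by (auto simp: pattern_matches_def in_set_conv_nth)
  then have "card (set ns) \<le> length es" by (metis card_lessThan card_mono finite_lessThan)
  moreover have "distinct ns" using assms by (simp add: pattern_matches_def)
  ultimately show ?thesis by (simp add: distinct_card)
qed

lemma bond_prod_path:
  assumes "edges_within N es" "\<sigma> \<in> configs N" "i < N" "ns \<in> pattern_matches es (path_patterns i vs)"
  shows "bond_prod es (set ns) \<sigma> = \<sigma> i * \<sigma> (last (i#vs))"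
  using assms(3,4)
proof (induction vs arbitrary: i ns)
  case Nil
  then show ?case by (simp add: pattern_matches_path_Nil bond_prod_def spin_square[OF assms(2)])
next
  case (Cons v vs)
  obtain n ns' where ns: "ns = n # ns'" using pattern_matches_path_Cons_shape[OF Cons.prems(2)] by blast
  have h: "n < length es" "es!n \<in> {(i,v),(v,i)}" "n \<notin> set ns'" "ns' \<in> pattern_matches es (path_patterns v vs)"
    using Cons.prems(2) unfolding ns Cons_in_pattern_matches_path by auto
  have v: "v < N" using edges_withinD[OF assms(1) h(1)] h(2) by auto
  have x: "bond es n \<sigma> = \<sigma> i * \<sigma> v" using h(2) unfolding bond_def by (auto simp: mult.commute)
  have "bond_prod es (set ns) \<sigma> = bond es n \<sigma> * bond_prod es (set ns') \<sigma>"
    unfolding ns bond_prod_def using h(3) by simp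
  also have "\<dots> = \<sigma> i * (\<sigma> v * \<sigma> v) * \<sigma> (last (v#vs))"
    using Cons.IH[OF v h(4)] x by (simp add: mult_ac)
  also have "\<dots> = \<sigma> i * \<sigma> (last (i#v#vs))"
    using spin_square[OF assms(2) v] by simp
  finally show ?case .
qed

text \<open>Otherwise flipping the single spin \<open>i\<close> changes the sign of \<open>\<sigma> i * \<sigma> j\<close> but not of
  the bond product.\<close>

lemma bond_touching_site_exists:
  assumes es: "edges_within N es" and S: "S \<subseteq> {..<length es}" and ij: "i < N" "j < N" "i \<noteq> j"
    and one: "\<forall>\<sigma>\<in>configs N. bond_prod es S \<sigma> * (\<sigma> i * \<sigma> j) = 1"
  shows "\<exists>\<nu>\<in>S. fst (es!\<nu>) = i \<or> snd (es!\<nu>) = i"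
proof (rule ccontr)
  assume no: "\<not> ?thesis"
  define \<rho> where "\<rho> = (\<lambda>v. if v < N then (if v = i then -1 else 1) else (undefined::real))"
  have \<rho>: "\<rho> \<in> configs N" unfolding \<rho>_def configs_iff by auto
  have "bond es \<nu> \<rho> = 1" if "\<nu> \<in> S" for \<nu>
    using edges_withinD[OF es, of \<nu>] S no that unfolding bond_def \<rho>_def by auto
  then have "bond_prod es S \<rho> = 1" unfolding bond_prod_def by simp
  moreover have "\<rho> i * \<rho> j = -1" using ij unfolding \<rho>_def by auto
  ultimately show False using one \<rho> by force
qed

lemma path_exists:
  assumes es: "edges_within N es" and "finite S" "S \<subseteq> {..<length es}" "i < N" "j < N"
    "\<forall>\<sigma>\<in>configs N. bond_prod es S \<sigma> * (\<sigma> i * \<sigma> j) = 1"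
  shows "\<exists>vs ns. ns \<in> pattern_matches es (path_patterns i vs) \<and> set ns \<subseteq> S \<and> last (i#vs) = j"
  using assms(2-)
proof (induction "card S" arbitrary: S i rule: less_induct)
  case less
  show ?case
  proof (cases "i = j")
    case True
    then show ?thesis by (intro exI[of _ "[]"]) (simp add: pattern_matches_path_Nil)
  next
    case False
    obtain \<nu> where \<nu>: "\<nu> \<in> S" "fst (es!\<nu>) = i \<or> snd (es!\<nu>) = i"
      using bond_touching_site_exists[OF es less.prems(2-4) False less.prems(5)] by blast
    define k where "k = (if fst (es!\<nu>) = i then snd (es!\<nu>) else fst (es!\<nu>))"
    have \<nu>_less: "\<nu> < length es" using \<nu> less.prems(2) by auto
    have edge: "es!\<nu> \<in> {(i,k),(k,i)}" using \<nu>(2) unfolding k_def by (cases "es!\<nu>") auto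
    have k: "k < N" using edges_withinD[OF es \<nu>_less] unfolding k_def by auto
    define S' where "S' = S - {\<nu>}"
    have card_less: "card S' < card S" unfolding S'_def by (rule card_Diff1_less[OF less.prems(1) \<nu>(1)])
    have one': "\<forall>\<sigma>\<in>configs N. bond_prod es S' \<sigma> * (\<sigma> k * \<sigma> j) = 1"
    proof
      fix \<sigma> assume \<sigma>: "\<sigma> \<in> configs N"
      have "bond es \<nu> \<sigma> = \<sigma> i * \<sigma> k" using edge unfolding bond_def by (auto simp: mult.commute)
      moreover have "bond_prod es S \<sigma> = bond es \<nu> \<sigma> * bond_prod es S' \<sigma>"
        unfolding bond_prod_def S'_def using less.prems(1) \<nu>(1) by (simp add: prod.remove)
      ultimately have "bond_prod es S \<sigma> * (\<sigma> i * \<sigma> j) = (\<sigma> i * \<sigma> i) * (bond_prod es S' \<sigma> * (\<sigma> k * \<sigma> j))"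
        by (simp add: mult_ac)
      then show "bond_prod es S' \<sigma> * (\<sigma> k * \<sigma> j) = 1"
        using less.prems(5) \<sigma> spin_square[OF \<sigma> less.prems(3)] by simp
    qed
    obtain vs ns where IH: "ns \<in> pattern_matches es (path_patterns k vs)" "set ns \<subseteq> S'" "last (k#vs) = j"
      using less.hyps[OF card_less _ _ k less.prems(4) one'] less.prems(1,2) unfolding S'_def by auto
    have "\<nu> # ns \<in> pattern_matches es (path_patterns i (k#vs))"
      unfolding Cons_in_pattern_matches_path using \<nu>_less edge IH(1,2) unfolding S'_def by auto
    moreover have "set (\<nu> # ns) \<subseteq> S" using IH(2) \<nu>(1) unfolding S'_def by auto
    moreover have "last (i#k#vs) = j" using IH(3) by simp
    ultimately show ?thesis by blast
  qed
qed


section \<open>Correlations bounded by paths\<close>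

definition site_lists :: "nat \<Rightarrow> nat \<Rightarrow> nat list set" where
  "site_lists N K = {vs. set vs \<subseteq> {..<N} \<and> length vs \<le> K}"

lemma finite_site_lists: "finite (site_lists N K)"
  unfolding site_lists_def by (rule finite_lists_length_le) simp

definition walks :: "nat \<Rightarrow> (nat \<times> nat) list \<Rightarrow> nat \<Rightarrow> (nat list \<times> nat list) set" where
  "walks N es i = (SIGMA vs:site_lists N (length es). pattern_matches es (path_patterns i vs))"

lemma finite_walks: "finite (walks N es i)"
  unfolding walks_def by (intro finite_SigmaI finite_site_lists finite_pattern_matches)

lemma sum_bond_prod_nonneg:
  assumes "edges_within N es" "S \<subseteq> {..<length es}"
  shows "0 \<le> (\<Sum>\<sigma>\<in>configs N. bond_prod es S \<sigma>)"
  by (rule sum_spin_character_nonneg[OF spin_character_bond_prod[OF assms]])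

lemma bond_prod_minus_path:
  assumes es: "edges_within N es" and \<sigma>: "\<sigma> \<in> configs N" and S: "finite S" and i: "i < N"
    and path: "ns \<in> pattern_matches es (path_patterns i vs)" "set ns \<subseteq> S"
  shows "bond_prod es (S - set ns) \<sigma> = bond_prod es S \<sigma> * (\<sigma> i * \<sigma> (last (i#vs)))"
proof -
  have j: "last (i#vs) < N" using pattern_matches_path_props[OF es i path(1)] by blast
  have "bond_prod es S \<sigma> = bond_prod es (S - set ns) \<sigma> * bond_prod es (set ns) \<sigma>"
    unfolding bond_prod_def by (rule prod.subset_diff[OF path(2) S])
  also have "bond_prod es (set ns) \<sigma> = \<sigma> i * \<sigma> (last (i#vs))"
    by (rule bond_prod_path[OF es \<sigma> i path(1)])
  finally show ?thesis
    using spin_square[OF \<sigma> i] spin_square[OF \<sigma> j] by (simp add: mult_ac)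
qed

text \<open>The sum of a character is \<open>|configs N|\<close> or \<open>0\<close>. In the first case a path from \<open>i\<close> to \<open>j\<close>
  inside \<open>S\<close> exists, and removing it leaves a character that is again identically \<open>1\<close>.\<close>

lemma sum_bond_prod_corr_le:
  assumes es: "edges_within N es" and S: "S \<subseteq> {..<length es}" and ij: "i < N" "j < N"
  shows "(\<Sum>\<sigma>\<in>configs N. bond_prod es S \<sigma> * (\<sigma> i * \<sigma> j))
     \<le> (\<Sum>\<tau>\<in>{\<tau>\<in>walks N es i. last (i # fst \<tau>) = j \<and> set (snd \<tau>) \<subseteq> S}.
            (\<Sum>\<sigma>\<in>configs N. bond_prod es (S - set (snd \<tau>)) \<sigma>))"
    (is "?G \<le> (\<Sum>\<tau>\<in>?T. ?F \<tau>)")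
proof -
  have finS: "finite S" using S finite_subset by blast
  have finT: "finite ?T" using finite_walks[of N es i] by (rule rev_finite_subset) blast
  have F_nonneg: "0 \<le> ?F \<tau>" for \<tau> using S by (intro sum_bond_prod_nonneg[OF es]) auto
  have character: "spin_character N (\<lambda>\<sigma>. bond_prod es S \<sigma> * (\<sigma> i * \<sigma> j))"
    by (intro spin_character_mult spin_character_bond_prod[OF es S] spin_character_site ij)
  show ?thesis
  proof (cases "\<forall>\<sigma>\<in>configs N. bond_prod es S \<sigma> * (\<sigma> i * \<sigma> j) = 1")
    case True
    obtain vs ns where path: "ns \<in> pattern_matches es (path_patterns i vs)" "set ns \<subseteq> S" "last (i#vs) = j"
      using path_exists[OF es finS S ij True] by blast
    have "(vs, ns) \<in> ?T"
      using path pattern_matches_path_props[OF es ij(1) path(1)] length_pattern_match_le[OF path(1)]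
      unfolding walks_def site_lists_def by auto
    have "?G = real (card (configs N))" using sum_spin_character[OF character] True by simp
    also have "\<dots> = ?F (vs, ns)"
      using True bond_prod_minus_path[OF es _ finS ij(1) path(1,2)] path(3)
      by (simp add: sum_spin_character[OF spin_character_bond_prod[OF es], of "S - set ns"] S)
    also have "\<dots> \<le> (\<Sum>\<tau>\<in>?T. ?F \<tau>)"
      by (rule member_le_sum[OF \<open>(vs, ns) \<in> ?T\<close> _ finT]) (rule F_nonneg)
    finally show ?thesis .
  next
    case False
    then have "?G = 0" by (simp only: sum_spin_character[OF character] if_not_P[OF False] if_False)
    also have "0 \<le> (\<Sum>\<tau>\<in>?T. ?F \<tau>)" by (intro sum_nonneg F_nonneg)
    finally show ?thesis .
  qed
qed

lemma ht_sum_supersets_le: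
  assumes es: "edges_within N es" and M: "M \<subseteq> {..<length es}" and t: "0 \<le> t"
  shows "(\<Sum>S\<in>{S\<in>Pow {..<length es}. M \<subseteq> S}. t ^ card S * (\<Sum>\<sigma>\<in>configs N. bond_prod es (S - M) \<sigma>))
     \<le> t ^ card M * ht_sum N t es (\<lambda>_. 1)"
proof -
  let ?P = "{S\<in>Pow {..<length es}. M \<subseteq> S}"
  let ?F = "\<lambda>S. (\<Sum>\<sigma>\<in>configs N. bond_prod es S \<sigma>)"
  have finM: "finite M" using M finite_subset by blast
  have "(\<Sum>S\<in>?P. t ^ card S * ?F (S - M)) = (\<Sum>S\<in>?P. t ^ card M * (t ^ card (S - M) * ?F (S - M)))"
  proof (intro sum.cong refl)
    fix S assume "S \<in> ?P"
    then have fS: "finite S" and MS: "M \<subseteq> S" using finite_subset[of S "{..<length es}"] by auto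
    then have "card M \<le> card S" by (rule card_mono)
    then have "card S = card M + card (S - M)" using finM MS by (simp add: card_Diff_subset)
    then show "t ^ card S * ?F (S - M) = t ^ card M * (t ^ card (S - M) * ?F (S - M))"
      by (simp add: power_add)
  qed
  also have "\<dots> = t ^ card M * (\<Sum>S\<in>?P. t ^ card (S - M) * ?F (S - M))"
    by (simp add: sum_distrib_left)
  also have "(\<Sum>S\<in>?P. t ^ card (S - M) * ?F (S - M)) = (\<Sum>S\<in>(\<lambda>S. S - M) ` ?P. t ^ card S * ?F S)"
  proof (rule sum.reindex[symmetric, unfolded comp_def])
    show "inj_on (\<lambda>S. S - M) ?P"
      by (rule inj_onI) auto
  qed
  also have "\<dots> \<le> (\<Sum>S\<in>Pow {..<length es}. t ^ card S * ?F S)"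
    by (rule sum_mono2) (auto intro!: mult_nonneg_nonneg sum_bond_prod_nonneg[OF es] zero_le_power t)
  also have "\<dots> = ht_sum N t es (\<lambda>_. 1)" by (simp add: ht_sum_expand)
  finally show ?thesis using t by (simp add: mult_left_mono)
qed

lemma ht_sum_corr_le:
  assumes es: "edges_within N es" and t: "0 \<le> t" and ij: "i < N" "j < N"
  shows "ht_sum N t es (\<lambda>\<sigma>. \<sigma> i * \<sigma> j)
     \<le> (\<Sum>\<tau>\<in>{\<tau>\<in>walks N es i. last (i # fst \<tau>) = j}. t ^ length (fst \<tau>)) * ht_sum N t es (\<lambda>_. 1)"
proof -
  let ?K = "{..<length es}"
  let ?T = "{\<tau>\<in>walks N es i. last (i # fst \<tau>) = j}"
  let ?F = "\<lambda>S. (\<Sum>\<sigma>\<in>configs N. bond_prod es S \<sigma>)"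
  have finT: "finite ?T" using finite_walks[of N es i] by (rule rev_finite_subset) blast
  have "ht_sum N t es (\<lambda>\<sigma>. \<sigma> i * \<sigma> j) = (\<Sum>S\<in>Pow ?K. t ^ card S * (\<Sum>\<sigma>\<in>configs N. bond_prod es S \<sigma> * (\<sigma> i * \<sigma> j)))"
    by (rule ht_sum_expand)
  also have "\<dots> \<le> (\<Sum>S\<in>Pow ?K. t ^ card S * (\<Sum>\<tau>\<in>{\<tau>\<in>?T. set (snd \<tau>) \<subseteq> S}. ?F (S - set (snd \<tau>))))"
  proof (intro sum_mono mult_left_mono zero_le_power t)
    fix S assume "S \<in> Pow ?K"
    then show "(\<Sum>\<sigma>\<in>configs N. bond_prod es S \<sigma> * (\<sigma> i * \<sigma> j)) \<le> (\<Sum>\<tau>\<in>{\<tau>\<in>?T. set (snd \<tau>) \<subseteq> S}. ?F (S - set (snd \<tau>)))"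
      using sum_bond_prod_corr_le[OF es _ ij, of S] by (simp add: conj_assoc)
  qed
  also have "\<dots> = (\<Sum>S\<in>Pow ?K. \<Sum>\<tau>\<in>{\<tau>\<in>?T. set (snd \<tau>) \<subseteq> S}. t ^ card S * ?F (S - set (snd \<tau>)))"
    by (simp add: sum_distrib_left)
  also have "\<dots> = (\<Sum>\<tau>\<in>?T. \<Sum>S\<in>{S\<in>Pow ?K. set (snd \<tau>) \<subseteq> S}. t ^ card S * ?F (S - set (snd \<tau>)))"
    by (rule sum.swap_restrict[OF _ finT]) simp
  also have "\<dots> \<le> (\<Sum>\<tau>\<in>?T. t ^ length (fst \<tau>) * ht_sum N t es (\<lambda>_. 1))"
  proof (rule sum_mono)
    fix \<tau> assume "\<tau> \<in> ?T"
    then obtain vs ns where tau: "\<tau> = (vs, ns)" "ns \<in> pattern_matches es (path_patterns i vs)" unfolding walks_def by auto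
    have pr: "length vs = length ns" "set ns \<subseteq> ?K"
      using pattern_matches_path_props[OF es ij(1) tau(2)] by auto
    have "card (set ns) = length vs" using pr tau(2) by (simp add: pattern_matches_def distinct_card)
    then show "(\<Sum>S\<in>{S\<in>Pow ?K. set (snd \<tau>) \<subseteq> S}. t ^ card S * ?F (S - set (snd \<tau>))) \<le> t ^ length (fst \<tau>) * ht_sum N t es (\<lambda>_. 1)"
      using ht_sum_supersets_le[OF es pr(2) t] tau(1) by simp
  qed
  also have "\<dots> = (\<Sum>\<tau>\<in>?T. t ^ length (fst \<tau>)) * ht_sum N t es (\<lambda>_. 1)"
    by (simp add: sum_distrib_right)
  finally show ?thesis .
qed

definition path_weight :: "nat \<Rightarrow> real \<Rightarrow> (nat \<times> nat) list \<Rightarrow> real" where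
  "path_weight N t es = (\<Sum>i<N. \<Sum>vs\<in>site_lists N (length es). t ^ length vs * real (card (pattern_matches es (path_patterns i vs))))"

lemma sum_gibbs_corr_le:
  assumes es: "edges_within N es" and b: "0 \<le> \<beta>" and i: "i < N"
  shows "(\<Sum>j<N. gibbs N \<beta> es (\<lambda>\<sigma>. \<sigma> i * \<sigma> j))
    \<le> (\<Sum>vs\<in>site_lists N (length es). tanh \<beta> ^ length vs * real (card (pattern_matches es (path_patterns i vs))))"
proof -
  let ?t = "tanh \<beta>"
  have t: "0 \<le> ?t" using b by simp
  let ?f = "\<lambda>\<tau>::nat list \<times> nat list. ?t ^ length (fst \<tau>)"
  have pos: "ht_sum N ?t es (\<lambda>_. 1) > 0" by (rule ht_sum_one_pos[OF es])
  have "(\<Sum>j<N. gibbs N \<beta> es (\<lambda>\<sigma>. \<sigma> i * \<sigma> j)) \<le> (\<Sum>j<N. \<Sum>\<tau>\<in>{\<tau>\<in>walks N es i. last (i # fst \<tau>) = j}. ?f \<tau>)"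
  proof (rule sum_mono)
    fix j assume "j \<in> {..<N}"
    then have j: "j < N" by simp
    show "gibbs N \<beta> es (\<lambda>\<sigma>. \<sigma> i * \<sigma> j) \<le> (\<Sum>\<tau>\<in>{\<tau>\<in>walks N es i. last (i # fst \<tau>) = j}. ?f \<tau>)"
      unfolding gibbs_ht_sum[OF es] using ht_sum_corr_le[OF es t i j] pos
      by (simp add: divide_le_eq)
  qed
  also have "\<dots> = (\<Sum>\<tau>\<in>walks N es i. \<Sum>j\<in>{j\<in>{..<N}. last (i # fst \<tau>) = j}. ?f \<tau>)"
    by (rule sum.swap_restrict) (simp_all add: finite_walks)
  also have "\<dots> = (\<Sum>\<tau>\<in>walks N es i. ?f \<tau>)"
  proof (rule sum.cong[OF refl])
    fix \<tau> assume "\<tau> \<in> walks N es i"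
    then obtain vs ns where "\<tau> = (vs, ns)" "ns \<in> pattern_matches es (path_patterns i vs)" unfolding walks_def by auto
    then have "last (i # fst \<tau>) < N" using pattern_matches_path_props[OF es i] by auto
    then have "{j\<in>{..<N}. last (i # fst \<tau>) = j} = {last (i # fst \<tau>)}" by auto
    then show "(\<Sum>j\<in>{j\<in>{..<N}. last (i # fst \<tau>) = j}. ?f \<tau>) = ?f \<tau>" by simp
  qed
  also have "\<dots> = (\<Sum>vs\<in>site_lists N (length es). \<Sum>ns\<in>pattern_matches es (path_patterns i vs). ?t ^ length vs)"
    unfolding walks_def by (subst sum.Sigma) (auto simp: finite_site_lists finite_pattern_matches split_def)
  also have "\<dots> = (\<Sum>vs\<in>site_lists N (length es). ?t ^ length vs * real (card (pattern_matches es (path_patterns i vs))))"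
    by (simp add: mult.commute)
  finally show ?thesis .
qed

lemma gibbs_magnetization_sq:
  assumes "N \<ge> 1"
  shows "gibbs N \<beta> es (\<lambda>\<sigma>. (magnetization N \<sigma>)\<^sup>2)
    = (\<Sum>i<N. \<Sum>j<N. gibbs N \<beta> es (\<lambda>\<sigma>. \<sigma> i * \<sigma> j)) / (real N)\<^sup>2"
proof -
  have "(\<lambda>\<sigma>. (magnetization N \<sigma>)\<^sup>2) = (\<lambda>\<sigma>. \<Sum>i<N. \<Sum>j<N. (1 / (real N)\<^sup>2) * (\<sigma> i * \<sigma> j))"
  proof (rule ext)
    fix \<sigma> :: "nat \<Rightarrow> real"
    have "(magnetization N \<sigma>)\<^sup>2 = (\<Sum>i<N. \<sigma> i) * (\<Sum>j<N. \<sigma> j) / (real N)\<^sup>2"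
      by (simp add: magnetization_def power2_eq_square)
    also have "\<dots> = (\<Sum>i<N. \<Sum>j<N. \<sigma> i * \<sigma> j) / (real N)\<^sup>2"
      by (simp add: sum_product)
    also have "\<dots> = (\<Sum>i<N. \<Sum>j<N. (1 / (real N)\<^sup>2) * (\<sigma> i * \<sigma> j))"
      by (simp add: sum_distrib_left sum_divide_distrib)
    finally show "(magnetization N \<sigma>)\<^sup>2 = (\<Sum>i<N. \<Sum>j<N. (1 / (real N)\<^sup>2) * (\<sigma> i * \<sigma> j))" .
  qed
  then show ?thesis
    by (simp add: gibbs_sum gibbs_divide sum_divide_distrib)
qed

lemma gibbs_magnetization_sq_le:
  assumes es: "edges_within N es" and b: "0 \<le> \<beta>" and N: "N \<ge> 1"
  shows "real N * gibbs N \<beta> es (\<lambda>\<sigma>. (magnetization N \<sigma>)\<^sup>2) \<le> path_weight N (tanh \<beta>) es / real N"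
proof -
  have "(\<Sum>i<N. \<Sum>j<N. gibbs N \<beta> es (\<lambda>\<sigma>. \<sigma> i * \<sigma> j)) \<le> path_weight N (tanh \<beta>) es"
    unfolding path_weight_def by (intro sum_mono sum_gibbs_corr_le[OF es b]) simp
  then show ?thesis using N unfolding gibbs_magnetization_sq[OF N]
    by (simp add: power2_eq_square divide_right_mono)
qed


section \<open>Expected number of path realisations\<close>

definition skip :: "nat \<Rightarrow> nat \<Rightarrow> nat" where
  "skip k m = (if m < k then m else Suc m)"

definition delete_at :: "nat \<Rightarrow> 'a list \<Rightarrow> 'a list" where
  "delete_at k gs = map (\<lambda>m. gs ! skip k m) [0..<length gs - 1]"

lemma skip_less: "k < l \<Longrightarrow> m < l - 1 \<Longrightarrow> skip k m < l"
  by (auto simp: skip_def)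

lemma skip_neq: "skip k m \<noteq> k"
  by (auto simp: skip_def)

lemma skip_inj: "skip k a = skip k b \<Longrightarrow> a = b"
  by (auto simp: skip_def split: if_splits)

lemma skip_onto: "m \<noteq> k \<Longrightarrow> m < l \<Longrightarrow> k < l \<Longrightarrow> \<exists>m'<l - 1. skip k m' = m"
  by (rule exI[of _ "if m < k then m else m - 1"]) (auto simp: skip_def)

lemma length_delete_at[simp]: "length (delete_at k gs) = length gs - 1"
  by (simp add: delete_at_def)

lemma nth_delete_at: "m < length gs - 1 \<Longrightarrow> delete_at k gs ! m = gs ! skip k m"
  by (simp add: delete_at_def)

lemma set_delete_at: "k < length gs \<Longrightarrow> set (delete_at k gs) \<subseteq> set gs"
  by (auto simp: delete_at_def intro!: nth_mem skip_less)

text \<open>Prepending an edge \<open>e\<close> to \<open>es\<close> shifts all indices by one; a match either avoids the new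
  index \<open>0\<close>, or uses it for exactly one pattern \<open>k\<close>, which then must contain \<open>e\<close>.\<close>

lemma card_pattern_matches_avoiding_head_le:
  "card {ns \<in> pattern_matches (e#es) gs. 0 \<notin> set ns} \<le> card (pattern_matches es gs)"
    (is "card ?A \<le> _")
proof (rule card_inj_on_le[of "map (\<lambda>n. n - 1)"])
  have pos: "1 \<le> n" if "x \<in> ?A" "n \<in> set x" for x n
    using that by (cases n) auto
  show "inj_on (map (\<lambda>n. n - 1)) ?A"
  proof (rule inj_onI)
    fix x y assume xy: "x \<in> ?A" "y \<in> ?A" "map (\<lambda>n. n - 1) x = map (\<lambda>n. n - 1) y"
    have "inj_on (\<lambda>n::nat. n - 1) (set x \<union> set y)"
      by (rule inj_on_diff_nat) (use pos xy(1,2) in blast)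
    then show "x = y" using xy(3) map_inj_on by blast
  qed
  show "map (\<lambda>n. n - 1) ` ?A \<subseteq> pattern_matches es gs"
  proof
    fix z assume "z \<in> map (\<lambda>n. n - 1) ` ?A"
    then obtain x where x: "x \<in> ?A" "z = map (\<lambda>n. n - 1) x" by blast
    have nonzero: "x ! k \<noteq> 0" if "k < length x" for k
      using x(1) that by (auto simp: in_set_conv_nth)
    have inj: "inj_on (\<lambda>n::nat. n - 1) (set x)"
      by (rule inj_on_diff_nat) (use pos x(1) in blast)
    have "length x = length gs" "distinct x"
      "\<forall>k<length gs. x!k < Suc (length es) \<and> (e#es)!(x!k) \<in> gs!k"
      using x(1) unfolding pattern_matches_def by auto
    then show "z \<in> pattern_matches es gs"
      unfolding pattern_matches_def using nonzero inj x(2)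
      by (auto simp: distinct_map less_Suc_eq_0_disj)
  qed
qed (rule finite_pattern_matches)

lemma card_pattern_matches_head_at_le:
  assumes k: "k < length gs" and e: "e \<in> gs!k"
  shows "card {ns \<in> pattern_matches (e#es) gs. ns!k = 0} \<le> card (pattern_matches es (delete_at k gs))"
    (is "card ?A \<le> _")
proof (rule card_inj_on_le[of "\<lambda>ns. map (\<lambda>n. n - 1) (delete_at k ns)"])
  let ?l = "length gs"
  have props: "length x = ?l \<and> distinct x \<and> x ! k = 0 \<and>
      (\<forall>m<?l. x!m < Suc (length es) \<and> (e#es)!(x!m) \<in> gs!m) \<and> (\<forall>m<?l. m \<noteq> k \<longrightarrow> x ! m \<noteq> 0)"
    if "x \<in> ?A" for x
  proof -
    have a: "length x = ?l" "distinct x" "x ! k = 0" "\<forall>m<?l. x!m < Suc (length es) \<and> (e#es)!(x!m) \<in> gs!m"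
      using that unfolding pattern_matches_def by auto
    moreover have "\<forall>m<?l. m \<noteq> k \<longrightarrow> x ! m \<noteq> 0" using a k by (metis nth_eq_iff_index_eq)
    ultimately show ?thesis by blast
  qed
  show "inj_on (\<lambda>ns. map (\<lambda>n. n - 1) (delete_at k ns)) ?A"
  proof (rule inj_onI)
    fix x y assume xy: "x \<in> ?A" "y \<in> ?A" "map (\<lambda>n. n - 1) (delete_at k x) = map (\<lambda>n. n - 1) (delete_at k y)"
    note px = props[OF xy(1)] and py = props[OF xy(2)]
    show "x = y"
    proof (rule nth_equalityI)
      show "length x = length y" using px py by simp
      fix m assume m: "m < length x"
      show "x ! m = y ! m"
      proof (cases "m = k")
        case False
        then obtain m' where m': "m' < ?l - 1" "skip k m' = m" using skip_onto m px k by metis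
        have "map (\<lambda>n. n - 1) (delete_at k x) ! m' = map (\<lambda>n. n - 1) (delete_at k y) ! m'"
          using xy(3) by simp
        then have "x ! m - 1 = y ! m - 1" using m' px py by (simp add: nth_delete_at)
        moreover have "x ! m \<noteq> 0" "y ! m \<noteq> 0" using px py m False by auto
        ultimately show ?thesis by simp
      qed (use px py in simp)
    qed
  qed
  show "(\<lambda>ns. map (\<lambda>n. n - 1) (delete_at k ns)) ` ?A \<subseteq> pattern_matches es (delete_at k gs)"
  proof
    fix z assume "z \<in> (\<lambda>ns. map (\<lambda>n. n - 1) (delete_at k ns)) ` ?A"
    then obtain x where x: "x \<in> ?A" "z = map (\<lambda>n. n - 1) (delete_at k x)" by blast
    note px = props[OF x(1)]
    have length_z: "length z = ?l - 1" using x(2) px by simp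
    have nth_z: "z ! m = x ! skip k m - 1" if "m < ?l - 1" for m
      using that x(2) px by (simp add: nth_delete_at)
    have nonzero: "x ! skip k m \<noteq> 0" if "m < ?l - 1" for m
      using px skip_less[OF k that] skip_neq[of k m] by blast
    have "distinct z"
      unfolding distinct_conv_nth
    proof (intro allI impI)
      fix a b assume ab: "a < length z" "b < length z" "a \<noteq> b"
      have "skip k a \<noteq> skip k b" using ab(3) skip_inj by blast
      then have "x ! skip k a \<noteq> x ! skip k b"
        using px skip_less[OF k] ab length_z by (simp add: nth_eq_iff_index_eq)
      moreover have "x ! skip k a \<noteq> 0" "x ! skip k b \<noteq> 0" using nonzero ab length_z by auto
      ultimately show "z ! a \<noteq> z ! b" using nth_z ab length_z by auto
    qed
    moreover have "z ! m < length es \<and> es ! (z ! m) \<in> delete_at k gs ! m" if m: "m < ?l - 1" for m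
    proof -
      have "skip k m < ?l" by (rule skip_less[OF k m])
      then have "x ! skip k m < Suc (length es)" "(e#es) ! (x ! skip k m) \<in> gs ! skip k m"
        using px by blast+
      then show ?thesis using nth_z[OF m] nonzero[OF m] nth_delete_at[OF m] by auto
    qed
    ultimately show "z \<in> pattern_matches es (delete_at k gs)"
      unfolding pattern_matches_def using length_z by auto
  qed
qed (rule finite_pattern_matches)

lemma card_pattern_matches_Cons_le:
  "card (pattern_matches (e#es) gs) \<le> card (pattern_matches es gs) +
     (\<Sum>k<length gs. if e \<in> gs!k then card (pattern_matches es (delete_at k gs)) else 0)"
proof -
  let ?A = "pattern_matches (e#es) gs"
  define A0 where "A0 = {ns\<in>?A. 0 \<notin> set ns}"
  define Ak where "Ak = (\<lambda>k. {ns\<in>?A. ns!k = 0})"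
  have "?A \<subseteq> A0 \<union> (\<Union>k<length gs. Ak k)"
    unfolding A0_def Ak_def pattern_matches_def by (auto simp: in_set_conv_nth)
  then have "card ?A \<le> card (A0 \<union> (\<Union>k<length gs. Ak k))"
    by (rule card_mono[rotated]) (simp add: A0_def Ak_def finite_pattern_matches)
  also have "\<dots> \<le> card A0 + (\<Sum>k<length gs. card (Ak k))"
    using card_Un_le card_UN_le[of "{..<length gs}" Ak] by (meson add_left_mono finite_lessThan order_trans)
  also have "\<dots> \<le> card (pattern_matches es gs) +
      (\<Sum>k<length gs. if e \<in> gs!k then card (pattern_matches es (delete_at k gs)) else 0)"
  proof (intro add_mono sum_mono)
    show "card A0 \<le> card (pattern_matches es gs)"
      unfolding A0_def by (rule card_pattern_matches_avoiding_head_le)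
    fix k assume k: "k \<in> {..<length gs}"
    show "card (Ak k) \<le> (if e \<in> gs!k then card (pattern_matches es (delete_at k gs)) else 0)"
    proof (cases "e \<in> gs!k")
      case True
      then show ?thesis unfolding Ak_def using card_pattern_matches_head_at_le k by simp
    next
      case False
      then have "Ak k = {}" using k unfolding Ak_def pattern_matches_def by force
      then show ?thesis by simp
    qed
  qed
  finally show ?thesis .
qed

lemma pattern_matches_Nil: "pattern_matches [] gs = (if gs = [] then {[]} else {})"
  unfolding pattern_matches_def by auto

lemma fact_binomial_step:
  fixes q :: real
  shows "fact l * real (K choose l) * q ^ l + real l * (fact (l - 1) * real (K choose (l - 1)) * q ^ (l - 1) * q)
       = fact l * real (Suc K choose l) * q ^ l"
proof (cases l)
  case 0
  then show ?thesis by simp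
next
  case (Suc m)
  have "real (Suc m) * fact m = fact (Suc m)" by simp
  then show ?thesis unfolding Suc
    by (simp add: algebra_simps power_Suc)
qed

lemma nn_integral_card_pattern_matches_Suc_le:
  fixes p :: "(nat \<times> nat) pmf" and K :: nat
  defines "c \<equiv> \<lambda>gs. \<integral>\<^sup>+es. of_nat (card (pattern_matches es gs)) \<partial>replicate_pmf K p"
  shows "(\<integral>\<^sup>+es. of_nat (card (pattern_matches es gs)) \<partial>replicate_pmf (Suc K) p)
     \<le> c gs + (\<Sum>k<length gs. c (delete_at k gs) * emeasure (measure_pmf p) (gs ! k))"
proof -
  let ?l = "length gs"
  have "(\<integral>\<^sup>+es. of_nat (card (pattern_matches es gs)) \<partial>replicate_pmf (Suc K) p)
      = (\<integral>\<^sup>+e. \<integral>\<^sup>+es. of_nat (card (pattern_matches (e#es) gs)) \<partial>replicate_pmf K p \<partial>p)"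
    by simp
  also have "\<dots> \<le> (\<integral>\<^sup>+e. \<integral>\<^sup>+es. (of_nat (card (pattern_matches es gs)) +
        (\<Sum>k<?l. indicator (gs!k) e * of_nat (card (pattern_matches es (delete_at k gs))))) \<partial>replicate_pmf K p \<partial>p)"
  proof (intro nn_integral_mono)
    fix e es
    have "of_nat (card (pattern_matches (e#es) gs)) \<le> (of_nat (card (pattern_matches es gs) +
       (\<Sum>k<?l. if e \<in> gs!k then card (pattern_matches es (delete_at k gs)) else 0)) :: ennreal)"
      using card_pattern_matches_Cons_le[of e es gs] by (simp only: of_nat_le_iff)
    also have "\<dots> = of_nat (card (pattern_matches es gs)) + (\<Sum>k<?l. indicator (gs!k) e * of_nat (card (pattern_matches es (delete_at k gs))))"
      unfolding of_nat_add of_nat_sum by (intro arg_cong2[where f="(+)"] refl sum.cong) (auto simp: indicator_def)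
    finally show "of_nat (card (pattern_matches (e#es) gs)) \<le> (of_nat (card (pattern_matches es gs)) +
        (\<Sum>k<?l. indicator (gs!k) e * of_nat (card (pattern_matches es (delete_at k gs)))) :: ennreal)" .
  qed
  also have "\<dots> = (\<integral>\<^sup>+e. c gs + (\<Sum>k<?l. c (delete_at k gs) * indicator (gs!k) e) \<partial>p)"
    unfolding c_def by (simp add: nn_integral_add nn_integral_sum nn_integral_cmult mult.commute)
  also have "\<dots> = (\<integral>\<^sup>+e. c gs \<partial>p) + (\<integral>\<^sup>+e. (\<Sum>k<?l. c (delete_at k gs) * indicator (gs!k) e) \<partial>p)"
    by (rule nn_integral_add) auto
  also have "\<dots> = c gs + (\<Sum>k<?l. \<integral>\<^sup>+e. c (delete_at k gs) * indicator (gs!k) e \<partial>p)"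
    by (subst nn_integral_sum) (simp_all add: measure_pmf.emeasure_space_1)
  also have "\<dots> = c gs + (\<Sum>k<?l. c (delete_at k gs) * emeasure (measure_pmf p) (gs ! k))"
    by (simp add: nn_integral_cmult_indicator)
  finally show ?thesis .
qed

text \<open>The bound \<open>l! (K choose l) q^l\<close> counts the injective choices of \<open>l\<close> of the \<open>K\<close> edges,
  each of which falls into its prescribed set with probability at most \<open>q\<close>.\<close>

lemma nn_integral_card_pattern_matches_le:
  fixes p :: "(nat \<times> nat) pmf" and q :: real
  assumes "\<forall>g\<in>set gs. emeasure (measure_pmf p) g \<le> ennreal q" "0 \<le> q"
  shows "(\<integral>\<^sup>+es. of_nat (card (pattern_matches es gs)) \<partial>replicate_pmf K p)
     \<le> ennreal (fact (length gs) * real (K choose length gs) * q ^ length gs)"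
  using assms(1)
proof (induction K arbitrary: gs)
  case 0
  then show ?case by (cases gs) (simp_all add: pattern_matches_Nil)
next
  case (Suc K)
  let ?l = "length gs"
  let ?c = "\<lambda>gs'. (\<integral>\<^sup>+es. of_nat (card (pattern_matches es gs')) \<partial>replicate_pmf K p)"
  have IH_gs: "?c gs \<le> ennreal (fact ?l * real (K choose ?l) * q ^ ?l)" using Suc.IH Suc.prems by blast
  have IH_delete: "?c (delete_at k gs) \<le> ennreal (fact (?l - 1) * real (K choose (?l - 1)) * q ^ (?l - 1))"
    if "k < ?l" for k
    using Suc.IH[of "delete_at k gs"] Suc.prems set_delete_at[OF that] by auto
  have q: "emeasure (measure_pmf p) (gs ! k) \<le> ennreal q" if "k < ?l" for k
    using Suc.prems that by auto
  have "(\<integral>\<^sup>+es. of_nat (card (pattern_matches es gs)) \<partial>replicate_pmf (Suc K) p)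
      \<le> ?c gs + (\<Sum>k<?l. ?c (delete_at k gs) * emeasure (measure_pmf p) (gs ! k))"
    by (rule nn_integral_card_pattern_matches_Suc_le)
  also have "\<dots> \<le> ennreal (fact ?l * real (K choose ?l) * q ^ ?l) +
      (\<Sum>k<?l. ennreal (fact (?l - 1) * real (K choose (?l - 1)) * q ^ (?l - 1)) * ennreal q)"
    by (intro add_mono IH_gs sum_mono mult_mono IH_delete q) auto
  also have "\<dots> = ennreal (fact ?l * real (K choose ?l) * q ^ ?l +
      real ?l * (fact (?l - 1) * real (K choose (?l - 1)) * q ^ (?l - 1) * q))"
    using assms(2) by (simp add: ennreal_mult' ennreal_plus ennreal_of_nat_eq_real_of_nat)
  also have "\<dots> = ennreal (fact ?l * real (Suc K choose ?l) * q ^ ?l)"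
    by (simp only: fact_binomial_step)
  finally show ?case .
qed


section \<open>Averaging over the random graph\<close>

lemma poisson_factorial_moment_sums:
  fixes r :: real
  assumes r: "0 < r"
  shows "(\<lambda>K. r ^ K / fact K * exp (- r) * (fact l * real (K choose l))) sums (r ^ l)"
proof -
  let ?f = "\<lambda>K. r ^ K / fact K * exp (- r) * (fact l * real (K choose l))"
  have z: "?f i = 0" if "i < l" for i using that by simp
  have sh: "?f (m + l) = (r ^ l * exp (- r)) * (r ^ m / fact m)" for m
  proof -
    have "real (m + l choose l) = fact (m + l) / (fact l * fact m)"
      by (simp add: binomial_fact)
    then show ?thesis by (simp add: power_add field_simps)
  qed
  have "(\<lambda>m. r ^ m / fact m) sums exp r"
    using exp_converges[of r] by (simp add: divide_inverse_commute)
  then have "(\<lambda>m. (r ^ l * exp (- r)) * (r ^ m / fact m)) sums ((r ^ l * exp (- r)) * exp r)"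
    by (rule sums_mult)
  then have "(\<lambda>m. ?f (m + l)) sums (r ^ l)"
    unfolding sh by (simp add: exp_minus field_simps)
  then show ?thesis using sums_zero_iff_shift[of l ?f] z by simp
qed

lemma nn_integral_poisson_factorial_moment:
  fixes r :: real
  assumes r: "0 < r"
  shows "(\<integral>\<^sup>+K. ennreal (fact l * real (K choose l)) \<partial>poisson_pmf r) = ennreal (r ^ l)"
proof -
  have "(\<integral>\<^sup>+K. ennreal (fact l * real (K choose l)) \<partial>poisson_pmf r)
      = (\<integral>\<^sup>+K. ennreal (r ^ K / fact K * exp (- r) * (fact l * real (K choose l))) \<partial>count_space UNIV)"
    using r by (simp add: nn_integral_measure_pmf ennreal_mult'[symmetric])
  also have "\<dots> = (\<Sum>K. ennreal (r ^ K / fact K * exp (- r) * (fact l * real (K choose l))))"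
    by (rule nn_integral_count_space_nat)
  also have "\<dots> = ennreal (\<Sum>K. r ^ K / fact K * exp (- r) * (fact l * real (K choose l)))"
    using r poisson_factorial_moment_sums[OF r, of l] by (intro suminf_ennreal2) (auto simp: sums_summable)
  also have "\<dots> = ennreal (r ^ l)" using poisson_factorial_moment_sums[OF r, of l] by (simp add: sums_iff)
  finally show ?thesis .
qed

lemma set_site_pair_pmf: "N \<ge> 1 \<Longrightarrow> set_pmf (site_pair_pmf N) = {..<N} \<times> {..<N}"
  unfolding site_pair_pmf_def by (subst set_pmf_of_set) (auto simp: lessThan_empty_iff)

lemma replicate_site_pair_support:
  assumes "N \<ge> 1" "es \<in> set_pmf (replicate_pmf K (site_pair_pmf N))"
  shows "length es = K" "edges_within N es"
  using assms by (auto simp: set_replicate_pmf set_site_pair_pmf edges_within_def)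

lemma emeasure_site_pair_edge_le:
  assumes N: "N \<ge> 1"
  shows "emeasure (measure_pmf (site_pair_pmf N)) {(a,b),(b,a)} \<le> ennreal (2 / (real N)\<^sup>2)"
proof -
  let ?S = "{..<N} \<times> {..<N}"
  have ne: "?S \<noteq> {}" using N by (auto simp: lessThan_empty_iff)
  have "card (?S \<inter> {(a,b),(b,a)}) \<le> card {(a,b),(b,a)}" by (rule card_mono) auto
  also have "\<dots> \<le> 2" by (rule order_trans[OF card_insert_le_m1]) auto
  finally have c: "real (card (?S \<inter> {(a,b),(b,a)})) \<le> 2" by simp
  have "emeasure (measure_pmf (site_pair_pmf N)) {(a,b),(b,a)} = ennreal (real (card (?S \<inter> {(a,b),(b,a)})) / (real N)\<^sup>2)"
    unfolding site_pair_pmf_def using ne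
    by (subst emeasure_pmf_of_set) (auto simp: power2_eq_square ennreal_of_nat_eq_real_of_nat divide_ennreal)
  also have "\<dots> \<le> ennreal (2 / (real N)\<^sup>2)"
    using c N by (intro ennreal_leI divide_right_mono) auto
  finally show ?thesis .
qed

lemma sum_site_lists_length:
  fixes h :: "nat \<Rightarrow> real"
  shows "(\<Sum>vs\<in>site_lists N K. h (length vs)) = (\<Sum>l\<le>K. real N ^ l * h l)"
proof -
  have "(\<Sum>vs\<in>site_lists N K. h (length vs)) = (\<Sum>l\<in>{..K}. \<Sum>vs\<in>{vs\<in>site_lists N K. length vs = l}. h (length vs))"
    by (rule sum.group[symmetric, OF finite_site_lists]) (auto simp: site_lists_def)
  also have "\<dots> = (\<Sum>l\<le>K. real N ^ l * h l)"
  proof (rule sum.cong[OF refl])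
    fix l assume "l \<in> {..K}"
    then have e: "{vs\<in>site_lists N K. length vs = l} = {vs. set vs \<subseteq> {..<N} \<and> length vs = l}"
      unfolding site_lists_def by auto
    have "(\<Sum>vs\<in>{vs\<in>site_lists N K. length vs = l}. h (length vs)) = (\<Sum>vs\<in>{vs. set vs \<subseteq> {..<N} \<and> length vs = l}. h l)"
      unfolding e by (intro sum.cong refl) simp
    also have "\<dots> = real N ^ l * h l" by (simp add: card_lists_length_eq)
    finally show "(\<Sum>vs\<in>{vs\<in>site_lists N K. length vs = l}. h (length vs)) = real N ^ l * h l" .
  qed
  finally show ?thesis .
qed

lemma nn_integral_card_path_matches_le:
  assumes N: "N \<ge> 1"
  shows "(\<integral>\<^sup>+es. of_nat (card (pattern_matches es (path_patterns i vs))) \<partial>replicate_pmf K (site_pair_pmf N))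
     \<le> ennreal (fact (length vs) * real (K choose length vs) * (2 / (real N)\<^sup>2) ^ length vs)"
proof -
  have "\<forall>g\<in>set (path_patterns i vs). emeasure (measure_pmf (site_pair_pmf N)) g \<le> ennreal (2 / (real N)\<^sup>2)"
    unfolding path_patterns_def using emeasure_site_pair_edge_le[OF N] by auto
  from nn_integral_card_pattern_matches_le[OF this] show ?thesis by simp
qed

lemma nn_integral_path_weight_le:
  assumes N: "N \<ge> 1" and t: "0 \<le> t"
  shows "(\<integral>\<^sup>+es. ennreal (path_weight N t es) \<partial>replicate_pmf K (site_pair_pmf N))
     \<le> ennreal (real N * (\<Sum>l\<le>K. fact l * real (K choose l) * (2 * t / real N) ^ l))"
proof -
  let ?p = "replicate_pmf K (site_pair_pmf N)"
  let ?b = "\<lambda>l. t ^ l * (fact l * real (K choose l) * (2 / (real N)\<^sup>2) ^ l)"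
  have "(\<integral>\<^sup>+es. ennreal (path_weight N t es) \<partial>?p)
      = (\<integral>\<^sup>+es. (\<Sum>i<N. \<Sum>vs\<in>site_lists N K. ennreal (t ^ length vs) * of_nat (card (pattern_matches es (path_patterns i vs)))) \<partial>?p)"
  proof (rule nn_integral_cong_AE, unfold AE_measure_pmf_iff, intro ballI)
    fix es assume "es \<in> set_pmf ?p"
    then have "length es = K" using replicate_site_pair_support[OF N] by blast
    then show "ennreal (path_weight N t es)
        = (\<Sum>i<N. \<Sum>vs\<in>site_lists N K. ennreal (t ^ length vs) * of_nat (card (pattern_matches es (path_patterns i vs))))"
      unfolding path_weight_def using t
      by (simp add: ennreal_of_nat_eq_real_of_nat ennreal_mult'[symmetric] sum_nonneg)
  qed
  also have "\<dots> = (\<Sum>i<N. \<Sum>vs\<in>site_lists N K. ennreal (t ^ length vs) *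
      (\<integral>\<^sup>+es. of_nat (card (pattern_matches es (path_patterns i vs))) \<partial>?p))"
    by (simp add: nn_integral_sum nn_integral_cmult)
  also have "\<dots> \<le> (\<Sum>i<N. \<Sum>vs\<in>site_lists N K. ennreal (t ^ length vs) *
      ennreal (fact (length vs) * real (K choose length vs) * (2 / (real N)\<^sup>2) ^ length vs))"
    by (intro sum_mono mult_left_mono nn_integral_card_path_matches_le[OF N]) auto
  also have "\<dots> = ennreal (\<Sum>i<N. \<Sum>vs\<in>site_lists N K. ?b (length vs))"
  proof -
    have b: "ennreal (t ^ l) * ennreal (fact l * real (K choose l) * (2 / (real N)\<^sup>2) ^ l) = ennreal (?b l)" for l
      using t by (simp add: ennreal_mult'[symmetric])
    have "0 \<le> ?b l" for l using t by simp
    then show ?thesis by (simp only: b sum_ennreal sum_nonneg)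
  qed
  also have "(\<Sum>i<N. \<Sum>vs\<in>site_lists N K. ?b (length vs)) = real N * (\<Sum>l\<le>K. real N ^ l * ?b l)"
    by (simp add: sum_site_lists_length[where h = ?b])
  also have "(\<Sum>l\<le>K. real N ^ l * ?b l) = (\<Sum>l\<le>K. fact l * real (K choose l) * (2 * t / real N) ^ l)"
  proof (rule sum.cong[OF refl])
    fix l
    have "real N * t * (2 / (real N)\<^sup>2) = 2 * t / real N" using N by (simp add: power2_eq_square field_simps)
    then have "real N ^ l * t ^ l * (2 / (real N)\<^sup>2) ^ l = (2 * t / real N) ^ l"
      by (metis power_mult_distrib)
    then show "real N ^ l * ?b l = fact l * real (K choose l) * (2 * t / real N) ^ l"
      by (simp add: mult_ac)
  qed
  finally show ?thesis .
qed

lemma magnetization_sq_le_one: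
  assumes "\<sigma> \<in> configs N"
  shows "(magnetization N \<sigma>)\<^sup>2 \<le> 1"
proof (cases "N = 0")
  case True then show ?thesis by (simp add: magnetization_def)
next
  case False
  have "\<bar>\<Sum>i<N. \<sigma> i\<bar> \<le> (\<Sum>i<N. \<bar>\<sigma> i\<bar>)" by (rule sum_abs)
  also have "\<dots> = real N" using abs_spin[OF assms] by simp
  finally have "\<bar>magnetization N \<sigma>\<bar> \<le> 1" using False
    by (simp add: magnetization_def divide_le_eq_1 abs_divide)
  then show ?thesis by (simp add: abs_square_le_1)
qed

lemma gibbs_magnetization_sq_bounds:
  "0 \<le> gibbs N \<beta> es (\<lambda>\<sigma>. (magnetization N \<sigma>)\<^sup>2)" "gibbs N \<beta> es (\<lambda>\<sigma>. (magnetization N \<sigma>)\<^sup>2) \<le> 1"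
  by (intro gibbs_nonneg gibbs_le_one magnetization_sq_le_one; simp)+

lemma nn_integral_poisson_falling_factorial_series:
  fixes r x :: real
  assumes r: "0 < r" and x: "0 \<le> x" and rx: "r * x < 1"
  shows "(\<integral>\<^sup>+K. (\<Sum>l. ennreal (fact l * real (K choose l) * x ^ l)) \<partial>poisson_pmf r) = ennreal (1 / (1 - r * x))"
proof -
  have "(\<integral>\<^sup>+K. (\<Sum>l. ennreal (fact l * real (K choose l) * x ^ l)) \<partial>poisson_pmf r)
      = (\<Sum>l. \<integral>\<^sup>+K. ennreal (fact l * real (K choose l) * x ^ l) \<partial>poisson_pmf r)"
    by (rule nn_integral_suminf) simp
  also have "\<dots> = (\<Sum>l. ennreal ((r * x) ^ l))"
  proof (rule suminf_cong)
    fix l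
    have "(\<integral>\<^sup>+K. ennreal (fact l * real (K choose l) * x ^ l) \<partial>poisson_pmf r)
        = (\<integral>\<^sup>+K. ennreal (fact l * real (K choose l)) * ennreal (x ^ l) \<partial>poisson_pmf r)"
      using x by (intro nn_integral_cong) (simp add: ennreal_mult)
    also have "\<dots> = (\<integral>\<^sup>+K. ennreal (fact l * real (K choose l)) \<partial>poisson_pmf r) * ennreal (x ^ l)"
      by (rule nn_integral_multc) simp
    also have "\<dots> = ennreal (r ^ l) * ennreal (x ^ l)"
      by (simp only: nn_integral_poisson_factorial_moment[OF r])
    also have "\<dots> = ennreal ((r * x) ^ l)"
      using r x by (simp only: ennreal_mult[symmetric] zero_le_power less_imp_le power_mult_distrib)
    finally show "(\<integral>\<^sup>+K. ennreal (fact l * real (K choose l) * x ^ l) \<partial>poisson_pmf r) = ennreal ((r * x) ^ l)" .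
  qed
  also have "\<dots> = ennreal (\<Sum>l. (r * x) ^ l)"
    using r x rx by (intro suminf_ennreal2) (simp_all add: summable_geometric)
  also have "\<dots> = ennreal (1 / (1 - r * x))"
    using r x rx by (simp add: suminf_geometric)
  finally show ?thesis .
qed

lemma nn_integral_magnetization_sq_replicate_le:
  assumes b: "0 \<le> \<beta>" and N: "N \<ge> 1"
  shows "(\<integral>\<^sup>+es. ennreal (real N * gibbs N \<beta> es (\<lambda>\<sigma>. (magnetization N \<sigma>)\<^sup>2)) \<partial>replicate_pmf K (site_pair_pmf N))
     \<le> (\<Sum>l. ennreal (fact l * real (K choose l) * (2 * tanh \<beta> / real N) ^ l))"
proof -
  let ?p = "replicate_pmf K (site_pair_pmf N)"
  let ?a = "\<lambda>l. fact l * real (K choose l) * (2 * tanh \<beta> / real N) ^ l"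
  have t: "0 \<le> tanh \<beta>" using b by simp
  have "(\<integral>\<^sup>+es. ennreal (real N * gibbs N \<beta> es (\<lambda>\<sigma>. (magnetization N \<sigma>)\<^sup>2)) \<partial>?p)
      \<le> (\<integral>\<^sup>+es. ennreal (1 / real N) * ennreal (path_weight N (tanh \<beta>) es) \<partial>?p)"
  proof (rule nn_integral_mono_AE, unfold AE_measure_pmf_iff, intro ballI)
    fix es assume "es \<in> set_pmf ?p"
    then have "edges_within N es" using replicate_site_pair_support[OF N] by blast
    from gibbs_magnetization_sq_le[OF this b N]
    show "ennreal (real N * gibbs N \<beta> es (\<lambda>\<sigma>. (magnetization N \<sigma>)\<^sup>2))
        \<le> ennreal (1 / real N) * ennreal (path_weight N (tanh \<beta>) es)"
      by (subst ennreal_mult'[symmetric]) (auto intro: ennreal_leI)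
  qed
  also have "\<dots> = ennreal (1 / real N) * (\<integral>\<^sup>+es. ennreal (path_weight N (tanh \<beta>) es) \<partial>?p)"
    by (rule nn_integral_cmult) simp
  also have "\<dots> \<le> ennreal (1 / real N) * ennreal (real N * (\<Sum>l\<le>K. ?a l))"
    by (intro mult_left_mono nn_integral_path_weight_le[OF N t]) simp
  also have "\<dots> = ennreal (\<Sum>l\<le>K. ?a l)"
    using N by (simp add: ennreal_mult'[symmetric])
  also have "\<dots> = (\<Sum>l\<le>K. ennreal (?a l))"
    using t by (intro sum_ennreal[symmetric]) simp
  also have "\<dots> = (\<Sum>l. ennreal (?a l))"
    by (rule suminf_finite[symmetric]) (auto simp: binomial_eq_0 not_le)
  finally show ?thesis .
qed

lemma N_times_Edis_magnetization_sq_le: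
  assumes a: "0 < \<alpha>" and b: "0 \<le> \<beta>" and c: "2 * \<alpha> * tanh \<beta> < 1" and N: "N \<ge> 1"
  shows "real N * Edis \<alpha> N (\<lambda>es. gibbs N \<beta> es (\<lambda>\<sigma>. (magnetization N \<sigma>)\<^sup>2)) \<le> 1 / (1 - 2 * \<alpha> * tanh \<beta>)"
proof -
  let ?g = "\<lambda>es. gibbs N \<beta> es (\<lambda>\<sigma>. (magnetization N \<sigma>)\<^sup>2)"
  let ?x = "2 * tanh \<beta> / real N"
  let ?r = "\<alpha> * real N"
  have rx: "?r * ?x = 2 * \<alpha> * tanh \<beta>" using N by (simp add: field_simps)
  have "(\<integral>\<^sup>+es. ennreal (real N * ?g es) \<partial>disorder \<alpha> N)
      = (\<integral>\<^sup>+K. \<integral>\<^sup>+es. ennreal (real N * ?g es) \<partial>replicate_pmf K (site_pair_pmf N) \<partial>poisson_pmf ?r)"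
    unfolding disorder_def by simp
  also have "\<dots> \<le> (\<integral>\<^sup>+K. (\<Sum>l. ennreal (fact l * real (K choose l) * ?x ^ l)) \<partial>poisson_pmf ?r)"
    by (intro nn_integral_mono nn_integral_magnetization_sq_replicate_le b N)
  also have "\<dots> = ennreal (1 / (1 - ?r * ?x))"
    using a b c N rx by (intro nn_integral_poisson_falling_factorial_series) simp_all
  also have "\<dots> = ennreal (1 / (1 - 2 * \<alpha> * tanh \<beta>))"
    by (simp only: rx)
  finally have bound: "(\<integral>\<^sup>+es. ennreal (real N * ?g es) \<partial>disorder \<alpha> N) \<le> ennreal (1 / (1 - 2 * \<alpha> * tanh \<beta>))" .
  have "real N * Edis \<alpha> N ?g = enn2real (\<integral>\<^sup>+es. ennreal (real N * ?g es) \<partial>disorder \<alpha> N)"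
    unfolding Edis_def
    by (simp only: integral_mult_right_zero[symmetric], rule integral_eq_nn_integral)
      (auto simp: gibbs_magnetization_sq_bounds)
  also have "\<dots> \<le> 1 / (1 - 2 * \<alpha> * tanh \<beta>)"
    using c by (intro enn2real_leI bound) simp
  finally show ?thesis .
qed


section \<open>Replicas and random sites\<close>

lemma gibbs_rep_overlap_sq:
  "gibbs_rep N \<beta> es n (\<lambda>\<tau>. (overlap N n \<tau>)\<^sup>2)
     = (\<Sum>i<N. \<Sum>j<N. gibbs N \<beta> es (\<lambda>\<sigma>. \<sigma> i * \<sigma> j) ^ n) / (real N)\<^sup>2"
proof -
  let ?P = "PiE {..<n} (\<lambda>_. configs N)"
  let ?w = "\<lambda>\<tau>. (\<Prod>a<n. boltz \<beta> es (\<tau> a))"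
  let ?Z = "partition_fn N \<beta> es"
  have ov: "(overlap N n \<tau>)\<^sup>2 = (\<Sum>i<N. \<Sum>j<N. (\<Prod>a<n. \<tau> a i * \<tau> a j)) / (real N)\<^sup>2" for \<tau>
    by (simp add: overlap_def power2_eq_square sum_product prod.distrib)
  have key: "(\<Sum>\<tau>\<in>?P. ?w \<tau> * (\<Prod>a<n. \<tau> a i * \<tau> a j)) = (\<Sum>\<sigma>\<in>configs N. boltz \<beta> es \<sigma> * (\<sigma> i * \<sigma> j)) ^ n" for i j
  proof -
    have "(\<Sum>\<tau>\<in>?P. ?w \<tau> * (\<Prod>a<n. \<tau> a i * \<tau> a j)) = (\<Sum>\<tau>\<in>?P. \<Prod>a<n. boltz \<beta> es (\<tau> a) * (\<tau> a i * \<tau> a j))"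
      by (simp add: prod.distrib)
    also have "\<dots> = (\<Prod>a<n. \<Sum>\<sigma>\<in>configs N. boltz \<beta> es \<sigma> * (\<sigma> i * \<sigma> j))"
      by (rule prod_sum_PiE[symmetric, where f = "\<lambda>a \<sigma>. boltz \<beta> es \<sigma> * (\<sigma> i * \<sigma> j)"]) (simp_all add: finite_configs)
    also have "\<dots> = (\<Sum>\<sigma>\<in>configs N. boltz \<beta> es \<sigma> * (\<sigma> i * \<sigma> j)) ^ n" by simp
    finally show ?thesis .
  qed
  have "gibbs_rep N \<beta> es n (\<lambda>\<tau>. (overlap N n \<tau>)\<^sup>2)
      = (\<Sum>\<tau>\<in>?P. \<Sum>i<N. \<Sum>j<N. ?w \<tau> * (\<Prod>a<n. \<tau> a i * \<tau> a j)) / (real N)\<^sup>2 / ?Z ^ n"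
    unfolding gibbs_rep_def ov by (simp add: sum_distrib_left sum_divide_distrib)
  also have "(\<Sum>\<tau>\<in>?P. \<Sum>i<N. \<Sum>j<N. ?w \<tau> * (\<Prod>a<n. \<tau> a i * \<tau> a j))
      = (\<Sum>i<N. \<Sum>j<N. \<Sum>\<tau>\<in>?P. ?w \<tau> * (\<Prod>a<n. \<tau> a i * \<tau> a j))"
    by (subst sum.swap, subst (2) sum.swap) (rule refl)
  also have "\<dots> = (\<Sum>i<N. \<Sum>j<N. (\<Sum>\<sigma>\<in>configs N. boltz \<beta> es \<sigma> * (\<sigma> i * \<sigma> j)) ^ n)"
    by (simp only: key)
  finally have e: "gibbs_rep N \<beta> es n (\<lambda>\<tau>. (overlap N n \<tau>)\<^sup>2)
      = (\<Sum>i<N. \<Sum>j<N. (\<Sum>\<sigma>\<in>configs N. boltz \<beta> es \<sigma> * (\<sigma> i * \<sigma> j)) ^ n) / (real N)\<^sup>2 / ?Z ^ n" .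
  have t: "(\<Sum>\<sigma>\<in>configs N. boltz \<beta> es \<sigma> * (\<sigma> i * \<sigma> j)) ^ n / ?Z ^ n = gibbs N \<beta> es (\<lambda>\<sigma>. \<sigma> i * \<sigma> j) ^ n" for i j
    unfolding gibbs_def by (simp add: power_divide)
  have "(\<Sum>i<N. \<Sum>j<N. (\<Sum>\<sigma>\<in>configs N. boltz \<beta> es \<sigma> * (\<sigma> i * \<sigma> j)) ^ n) / (real N)\<^sup>2 / ?Z ^ n
     = (\<Sum>i<N. \<Sum>j<N. (\<Sum>\<sigma>\<in>configs N. boltz \<beta> es \<sigma> * (\<sigma> i * \<sigma> j)) ^ n) / ?Z ^ n / (real N)\<^sup>2"
    by (simp add: divide_divide_eq_left mult.commute)
  also have "(\<Sum>i<N. \<Sum>j<N. (\<Sum>\<sigma>\<in>configs N. boltz \<beta> es \<sigma> * (\<sigma> i * \<sigma> j)) ^ n) / ?Z ^ n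
     = (\<Sum>i<N. \<Sum>j<N. (\<Sum>\<sigma>\<in>configs N. boltz \<beta> es \<sigma> * (\<sigma> i * \<sigma> j)) ^ n / ?Z ^ n)"
    by (simp only: sum_divide_distrib)
  also have "\<dots> = (\<Sum>i<N. \<Sum>j<N. gibbs N \<beta> es (\<lambda>\<sigma>. \<sigma> i * \<sigma> j) ^ n)"
    by (simp only: t)
  finally show ?thesis using e by simp
qed

lemma set_disorder_edges_within:
  assumes N: "N \<ge> 1" "es \<in> set_pmf (disorder \<alpha> N)"
  shows "edges_within N es"
proof -
  from assms obtain K where "es \<in> set_pmf (replicate_pmf K (site_pair_pmf N))"
    unfolding disorder_def by auto
  then show ?thesis using replicate_site_pair_support[OF N(1)] by blast
qed

lemma Edis_sites_site_average:
  assumes N: "N \<ge> 1"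
    and nn: "\<And>es i j. es \<in> set_pmf (disorder \<alpha> N) \<Longrightarrow> i < N \<Longrightarrow> j < N \<Longrightarrow> 0 \<le> F es i j"
  shows "Edis_sites \<alpha> N F = Edis \<alpha> N (\<lambda>es. (\<Sum>i<N. \<Sum>j<N. F es i j) / (real N)\<^sup>2)"
proof -
  let ?S = "{..<N} \<times> {..<N}"
  let ?avg = "\<lambda>es. (\<Sum>i<N. \<Sum>j<N. F es i j) / (real N)\<^sup>2"
  have ne: "?S \<noteq> {}" using N by (auto simp: lessThan_empty_iff)
  have avgnn: "0 \<le> ?avg es" if "es \<in> set_pmf (disorder \<alpha> N)" for es
    using nn[OF that] by (intro divide_nonneg_nonneg sum_nonneg) auto
  have "Edis_sites \<alpha> N F = enn2real (\<integral>\<^sup>+p. ennreal (case p of (es, (i0, j0)) \<Rightarrow> F es i0 j0) \<partial>pair_pmf (disorder \<alpha> N) (site_pair_pmf N))"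
    unfolding Edis_sites_def
    by (rule integral_eq_nn_integral) (auto simp: AE_measure_pmf_iff set_site_pair_pmf[OF N] nn)
  also have "(\<integral>\<^sup>+p. ennreal (case p of (es, (i0, j0)) \<Rightarrow> F es i0 j0) \<partial>pair_pmf (disorder \<alpha> N) (site_pair_pmf N))
     = (\<integral>\<^sup>+es. \<integral>\<^sup>+ij. ennreal (F es (fst ij) (snd ij)) \<partial>site_pair_pmf N \<partial>disorder \<alpha> N)"
    by (simp add: nn_integral_pair_pmf' split_def)
  also have "\<dots> = (\<integral>\<^sup>+es. ennreal (?avg es) \<partial>disorder \<alpha> N)"
  proof (rule nn_integral_cong_AE, unfold AE_measure_pmf_iff, intro ballI)
    fix es assume es: "es \<in> set_pmf (disorder \<alpha> N)"
    have "(\<integral>\<^sup>+ij. ennreal (F es (fst ij) (snd ij)) \<partial>site_pair_pmf N)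
        = (\<Sum>ij\<in>?S. ennreal (F es (fst ij) (snd ij))) / of_nat (card ?S)"
      unfolding site_pair_pmf_def using ne by (subst nn_integral_pmf_of_set) auto
    also have "(\<Sum>ij\<in>?S. ennreal (F es (fst ij) (snd ij))) = ennreal (\<Sum>ij\<in>?S. F es (fst ij) (snd ij))"
      using nn[OF es] by (intro sum_ennreal) auto
    also have "(\<Sum>ij\<in>?S. F es (fst ij) (snd ij)) = (\<Sum>i<N. \<Sum>j<N. F es i j)"
      unfolding sum.cartesian_product by (simp add: split_def)
    also have "of_nat (card ?S) = ennreal ((real N)\<^sup>2)"
      by (simp add: card_cartesian_product power2_eq_square ennreal_of_nat_eq_real_of_nat)
    also have "ennreal (\<Sum>i<N. \<Sum>j<N. F es i j) / ennreal ((real N)\<^sup>2) = ennreal (?avg es)"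
      using nn[OF es] N by (intro divide_ennreal sum_nonneg) auto
    finally show "(\<integral>\<^sup>+ij. ennreal (F es (fst ij) (snd ij)) \<partial>site_pair_pmf N) = ennreal (?avg es)" .
  qed
  also have "enn2real \<dots> = Edis \<alpha> N ?avg"
    unfolding Edis_def
    by (rule integral_eq_nn_integral[symmetric]) (auto simp: AE_measure_pmf_iff avgnn)
  finally show ?thesis .
qed

lemma site_average_bounds:
  assumes N: "N \<ge> 1" and b: "\<And>i j. i < N \<Longrightarrow> j < N \<Longrightarrow> 0 \<le> F i j \<and> F i j \<le> (1::real)"
  shows "0 \<le> (\<Sum>i<N. \<Sum>j<N. F i j) / (real N)\<^sup>2 \<and> (\<Sum>i<N. \<Sum>j<N. F i j) / (real N)\<^sup>2 \<le> 1"
proof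
  show "0 \<le> (\<Sum>i<N. \<Sum>j<N. F i j) / (real N)\<^sup>2" using b by (intro divide_nonneg_nonneg sum_nonneg) auto
  have "(\<Sum>i<N. \<Sum>j<N. F i j) \<le> (\<Sum>i<N. \<Sum>j<N. (1::real))" using b by (intro sum_mono) auto
  also have "\<dots> = (real N)\<^sup>2" by (simp add: power2_eq_square)
  finally show "(\<Sum>i<N. \<Sum>j<N. F i j) / (real N)\<^sup>2 \<le> 1" using N by simp
qed

lemma gibbs_corr_bounds:
  assumes "edges_within N es" "0 \<le> \<beta>" "i < N" "j < N"
  shows "0 \<le> gibbs N \<beta> es (\<lambda>\<sigma>. \<sigma> i * \<sigma> j)" "gibbs N \<beta> es (\<lambda>\<sigma>. \<sigma> i * \<sigma> j) \<le> 1"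
proof -
  show "0 \<le> gibbs N \<beta> es (\<lambda>\<sigma>. \<sigma> i * \<sigma> j)" by (rule gibbs_corr_nonneg[OF assms])
  show "gibbs N \<beta> es (\<lambda>\<sigma>. \<sigma> i * \<sigma> j) \<le> 1"
  proof (rule gibbs_le_one)
    fix \<sigma> assume s: "\<sigma> \<in> configs N"
    have "\<bar>\<sigma> i * \<sigma> j\<bar> = 1" using abs_spin[OF s assms(3)] abs_spin[OF s assms(4)] by (simp add: abs_mult)
    then show "\<sigma> i * \<sigma> j \<le> 1" by simp
  qed
qed

lemma gibbs_corr_in_unit_interval:
  assumes "N \<ge> 1" "es \<in> set_pmf (disorder \<alpha> N)" "0 \<le> \<beta>" "i < N" "j < N"
  shows "0 \<le> gibbs N \<beta> es (\<lambda>\<sigma>. \<sigma> i * \<sigma> j) \<and> gibbs N \<beta> es (\<lambda>\<sigma>. \<sigma> i * \<sigma> j) \<le> 1"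
  using gibbs_corr_bounds[OF set_disorder_edges_within[OF assms(1,2)] assms(3-)] by simp

lemma Edis_overlap_sq:
  assumes "N \<ge> 1" "0 \<le> \<beta>"
  shows "Edis \<alpha> N (\<lambda>es. gibbs_rep N \<beta> es n (\<lambda>\<tau>. (overlap N n \<tau>)\<^sup>2))
    = Edis_sites \<alpha> N (\<lambda>es i0 j0. (gibbs N \<beta> es (\<lambda>\<sigma>. \<sigma> i0 * \<sigma> j0)) ^ n)"
  using gibbs_corr_in_unit_interval[OF assms(1) _ assms(2)]
  by (subst Edis_sites_site_average[OF assms(1)]) (simp_all add: gibbs_rep_overlap_sq)

lemma Edis_sites_corr:
  assumes "N \<ge> 1" "0 \<le> \<beta>"
  shows "Edis_sites \<alpha> N (\<lambda>es i0 j0. gibbs N \<beta> es (\<lambda>\<sigma>. \<sigma> i0 * \<sigma> j0))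
    = Edis \<alpha> N (\<lambda>es. gibbs N \<beta> es (\<lambda>\<sigma>. (magnetization N \<sigma>)\<^sup>2))"
  using gibbs_corr_in_unit_interval[OF assms(1) _ assms(2)]
  by (subst Edis_sites_site_average[OF assms(1)]) (simp_all add: gibbs_magnetization_sq[OF assms(1)])

lemma Edis_sites_corr_power_le:
  assumes N: "N \<ge> 1" and b: "0 \<le> \<beta>" and n: "n \<ge> 1"
  shows "Edis_sites \<alpha> N (\<lambda>es i0 j0. (gibbs N \<beta> es (\<lambda>\<sigma>. \<sigma> i0 * \<sigma> j0)) ^ n)
    \<le> Edis_sites \<alpha> N (\<lambda>es i0 j0. gibbs N \<beta> es (\<lambda>\<sigma>. \<sigma> i0 * \<sigma> j0))"
proof -
  let ?C = "\<lambda>es i j. gibbs N \<beta> es (\<lambda>\<sigma>. \<sigma> i * \<sigma> j)"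
  note unit = gibbs_corr_in_unit_interval[OF N _ b]
  have "Edis \<alpha> N (\<lambda>es. (\<Sum>i<N. \<Sum>j<N. ?C es i j ^ n) / (real N)\<^sup>2)
      \<le> Edis \<alpha> N (\<lambda>es. (\<Sum>i<N. \<Sum>j<N. ?C es i j) / (real N)\<^sup>2)"
    unfolding Edis_def
  proof (rule integral_mono_AE')
    let ?f = "\<lambda>es. (\<Sum>i<N. \<Sum>j<N. ?C es i j) / (real N)\<^sup>2"
    have f: "0 \<le> ?f es \<and> ?f es \<le> 1" if "es \<in> set_pmf (disorder \<alpha> N)" for es
      by (rule site_average_bounds[OF N]) (rule unit[OF that])
    show "integrable (measure_pmf (disorder \<alpha> N)) ?f"
      by (rule measure_pmf.integrable_const_bound[where B = 1]) (auto simp: AE_measure_pmf_iff dest: f)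
    show "AE es in measure_pmf (disorder \<alpha> N). 0 \<le> ?f es"
      by (auto simp: AE_measure_pmf_iff dest: f)
    show "AE es in measure_pmf (disorder \<alpha> N). (\<Sum>i<N. \<Sum>j<N. ?C es i j ^ n) / (real N)\<^sup>2 \<le> ?f es"
      unfolding AE_measure_pmf_iff
      using unit n by (auto intro!: divide_right_mono sum_mono power_decreasing[of 1 n, simplified])
  qed
  then show ?thesis
    using unit by (subst (1 2) Edis_sites_site_average[OF N]) simp_all
qed

theorem mainTheorem1:
  fixes \<alpha> \<beta> :: real
  assumes "\<alpha> > 0" and "\<beta> \<ge> 0" and "2 * \<alpha> * tanh \<beta> < 1"
  shows "(\<forall>N n::nat. N \<ge> 1 \<and> n \<ge> 2 \<longrightarrow>
           Edis \<alpha> N (\<lambda>es. gibbs_rep N \<beta> es n (\<lambda>\<tau>. (overlap N n \<tau>)\<^sup>2))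
             = Edis_sites \<alpha> N (\<lambda>es i0 j0. (gibbs N \<beta> es (\<lambda>\<sigma>. \<sigma> i0 * \<sigma> j0)) ^ n)
         \<and> Edis_sites \<alpha> N (\<lambda>es i0 j0. (gibbs N \<beta> es (\<lambda>\<sigma>. \<sigma> i0 * \<sigma> j0)) ^ n)
             \<le> Edis_sites \<alpha> N (\<lambda>es i0 j0. gibbs N \<beta> es (\<lambda>\<sigma>. \<sigma> i0 * \<sigma> j0))
         \<and> Edis_sites \<alpha> N (\<lambda>es i0 j0. gibbs N \<beta> es (\<lambda>\<sigma>. \<sigma> i0 * \<sigma> j0))
             = Edis \<alpha> N (\<lambda>es. gibbs N \<beta> es (\<lambda>\<sigma>. (magnetization N \<sigma>)\<^sup>2)))
       \<and> bdd_above ((\<lambda>N. real N * Edis \<alpha> N (\<lambda>es. gibbs N \<beta> es (\<lambda>\<sigma>. (magnetization N \<sigma>)\<^sup>2))) ` {1..})"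
proof (intro conjI allI impI)
  fix N n :: nat
  assume "N \<ge> 1 \<and> n \<ge> 2"
  then have N: "N \<ge> 1" and n: "n \<ge> 1" by auto
  show "Edis \<alpha> N (\<lambda>es. gibbs_rep N \<beta> es n (\<lambda>\<tau>. (overlap N n \<tau>)\<^sup>2))
      = Edis_sites \<alpha> N (\<lambda>es i0 j0. (gibbs N \<beta> es (\<lambda>\<sigma>. \<sigma> i0 * \<sigma> j0)) ^ n)"
    by (rule Edis_overlap_sq[OF N assms(2)])
  show "Edis_sites \<alpha> N (\<lambda>es i0 j0. (gibbs N \<beta> es (\<lambda>\<sigma>. \<sigma> i0 * \<sigma> j0)) ^ n)
      \<le> Edis_sites \<alpha> N (\<lambda>es i0 j0. gibbs N \<beta> es (\<lambda>\<sigma>. \<sigma> i0 * \<sigma> j0))"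
    by (rule Edis_sites_corr_power_le[OF N assms(2) n])
  show "Edis_sites \<alpha> N (\<lambda>es i0 j0. gibbs N \<beta> es (\<lambda>\<sigma>. \<sigma> i0 * \<sigma> j0))
      = Edis \<alpha> N (\<lambda>es. gibbs N \<beta> es (\<lambda>\<sigma>. (magnetization N \<sigma>)\<^sup>2))"
    by (rule Edis_sites_corr[OF N assms(2)])
next
  show "bdd_above ((\<lambda>N. real N * Edis \<alpha> N (\<lambda>es. gibbs N \<beta> es (\<lambda>\<sigma>. (magnetization N \<sigma>)\<^sup>2))) ` {1..})"
    using N_times_Edis_magnetization_sq_le[OF assms]
    by (intro bdd_aboveI2[where M = "1 / (1 - 2 * \<alpha> * tanh \<beta>)"]) auto
qed

end
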